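(* Let $0\le t<T$ and let $S^i,S^j$ be strictly positive continuous semimartingales on $[t,T]$, $Y^k=\log S^k$, $\alpha:=S^i_t$, $\beta:=S^j_t$. Then, with $F(z,z_0):=\frac{z-z_0}{z_0}-\log\frac{z}{z_0}$ for $z,z_0>0$: (a) $F(z,z_0)=\int_0^{z_0}\frac{(K-z)^+}{K^2}\mathrm dK+\int_{z_0}^\infty\frac{(z-K)^+}{K^2}\mathrm dK$, and $$F(x,\alpha)F(y,\beta)=\iint_{\mathbb R_+^2}\frac{\Pi_{ij}(x,y;K_1,K_2)}{K_1^2K_2^2}\,\mathrm dK_1\mathrm dK_2,$$ $$\Pi_{ij}(x,y;K_1,K_2):=\big((K_1-x)^+\mathbb 1_{\{K_1\le\alpha\}}+(x-K_1)^+\mathbb 1_{\{K_1>\alpha\}}\big)\big((K_2-y)^+\mathbb 1_{\{K_2\le\beta\}}+(y-K_2)^+\mathbb 1_{\{K_2>\beta\}}\big);$$ (b) writing $x=S^i_T$, $y=S^j_T$, the quadratic covariation over $[t,T]$ satisfies $$\langle Y^i,Y^j\rangle_{t,T}=\frac{Y^i_t}{\beta}(y-\beta)+\frac{Y^j_t}{\alpha}(x-\alpha)-Y^i_tF(y,\beta)-Y^j_tF(x,\alpha)+\frac{(x-\alpha)(y-\beta)}{\alpha\beta}-\frac{x-\alpha}{\alpha}F(y,\beta)-\frac{y-\beta}{\beta}F(x,\alpha)+F(x,\alpha)F(y,\beta)$$ $$\qquad-\int_t^T\frac{Y^i_u}{S^j_u}\mathrm dS^j_u-\int_t^T\frac{Y^j_u}{S^i_u}\mathrm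 dS^i_u+\frac12\int_t^T\frac{Y^i_u}{(S^j_u)^2}\mathrm d\langle S^j\rangle_u+\frac12\int_t^T\frac{Y^j_u}{(S^i_u)^2}\mathrm d\langle S^i\rangle_u,$$ and moreover $(x-\alpha)(y-\beta)=C_\alpha(x)C_\beta(y)-C_\alpha(x)P_\beta(y)-P_\alpha(x)C_\beta(y)+P_\alpha(x)P_\beta(y)$ with $C_a(z)=(z-a)^+$, $P_a(z)=(a-z)^+$.
   Context: $\langle Y^i,Y^j\rangle_{t,T}$ is the quadratic covariation of $Y^i,Y^j$ accumulated over $[t,T]$ and $\langle S^k\rangle$ the quadratic variation of $S^k$; all processes are continuous. *)

theory Defs
  imports "HOL-Probability.Probability"
begin

text \<open>Processes are functions X :: real => 'a => real (time, sample point).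
  Everything is relative to a probability space M and a filtration F.\<close>

definition is_filtration :: "'a measure \<Rightarrow> (real \<Rightarrow> 'a measure) \<Rightarrow> bool" where
  "is_filtration M F \<longleftrightarrow> (\<forall>s. subalgebra M (F s)) \<and> (\<forall>s u. s \<le> u \<longrightarrow> sets (F s) \<subseteq> sets (F u))"

definition adapted_on :: "(real \<Rightarrow> 'a measure) \<Rightarrow> real \<Rightarrow> real \<Rightarrow> (real \<Rightarrow> 'a \<Rightarrow> real) \<Rightarrow> bool" where
  "adapted_on F t T X \<longleftrightarrow> (\<forall>u\<in>{t..T}. X u \<in> borel_measurable (F u))"

definition continuous_paths_on :: "'a measure \<Rightarrow> real \<Rightarrow> real \<Rightarrow> (real \<Rightarrow> 'a \<Rightarrow> real) \<Rightarrow> bool" where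
  "continuous_paths_on M t T X \<longleftrightarrow> (AE \<omega> in M. continuous_on {t..T} (\<lambda>u. X u \<omega>))"

definition martingale_on :: "'a measure \<Rightarrow> (real \<Rightarrow> 'a measure) \<Rightarrow> real \<Rightarrow> real \<Rightarrow> (real \<Rightarrow> 'a \<Rightarrow> real) \<Rightarrow> bool" where
  "martingale_on M F t T X \<longleftrightarrow> adapted_on F t T X \<and> (\<forall>u\<in>{t..T}. integrable M (X u)) \<and>
     (\<forall>s u. t \<le> s \<longrightarrow> s \<le> u \<longrightarrow> u \<le> T \<longrightarrow>
        (AE \<omega> in M. real_cond_exp M (F s) (X u) \<omega> = X s \<omega>))"

definition cont_local_martingale_on :: "'a measure \<Rightarrow> (real \<Rightarrow> 'a measure) \<Rightarrow> real \<Rightarrow> real \<Rightarrow> (real \<Rightarrow> 'a \<Rightarrow> real) \<Rightarrow> bool" where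
  "cont_local_martingale_on M F t T X \<longleftrightarrow> adapted_on F t T X \<and> continuous_paths_on M t T X \<and>
     (\<exists>\<tau> :: nat \<Rightarrow> 'a \<Rightarrow> real. (\<forall>n. stopping_time F (\<tau> n)) \<and>
        (AE \<omega> in M. (\<forall>n. \<tau> n \<omega> \<le> \<tau> (Suc n) \<omega>) \<and> (\<exists>n. T \<le> \<tau> n \<omega>)) \<and>
        (\<forall>n. martingale_on M F t T (\<lambda>u \<omega>. X (max t (min u (\<tau> n \<omega>))) \<omega>)))"

definition bounded_variation_on :: "real \<Rightarrow> real \<Rightarrow> (real \<Rightarrow> real) \<Rightarrow> bool" where
  "bounded_variation_on a b f \<longleftrightarrow> (\<exists>B. \<forall>(n::nat) (p::nat \<Rightarrow> real). p 0 = a \<longrightarrow> p n = b \<longrightarrow>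
      (\<forall>k<n. p k \<le> p (Suc k)) \<longrightarrow> (\<Sum>k<n. \<bar>f (p (Suc k)) - f (p k)\<bar>) \<le> B)"

definition cont_semimartingale_on :: "'a measure \<Rightarrow> (real \<Rightarrow> 'a measure) \<Rightarrow> real \<Rightarrow> real \<Rightarrow> (real \<Rightarrow> 'a \<Rightarrow> real) \<Rightarrow> bool" where
  "cont_semimartingale_on M F t T X \<longleftrightarrow> adapted_on F t T X \<and> continuous_paths_on M t T X \<and>
     (\<exists>Mg A. cont_local_martingale_on M F t T Mg \<and> adapted_on F t T A \<and> continuous_paths_on M t T A \<and>
        (AE \<omega> in M. bounded_variation_on t T (\<lambda>u. A u \<omega>)) \<and>
        (AE \<omega> in M. Mg t \<omega> = 0 \<and> A t \<omega> = 0 \<and> (\<forall>u\<in>{t..T}. X u \<omega> = X t \<omega> + Mg u \<omega> + A u \<omega>)))"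

definition partition_seq :: "real \<Rightarrow> real \<Rightarrow> (nat \<Rightarrow> nat \<Rightarrow> real) \<Rightarrow> (nat \<Rightarrow> nat) \<Rightarrow> bool" where
  "partition_seq t T p N \<longleftrightarrow>
     (\<forall>n. p n 0 = t \<and> p n (N n) = T \<and> (\<forall>k<N n. p n k < p n (Suc k))) \<and>
     (\<lambda>n. Max ((\<lambda>k. p n (Suc k) - p n k) ` {..<N n})) \<longlonglongrightarrow> 0"

definition conv_in_prob :: "'a measure \<Rightarrow> (nat \<Rightarrow> 'a \<Rightarrow> real) \<Rightarrow> ('a \<Rightarrow> real) \<Rightarrow> bool" where
  "conv_in_prob M Z Z0 \<longleftrightarrow>
     (\<forall>e>0. (\<lambda>n. measure M {\<omega>\<in>space M. e < \<bar>Z n \<omega> - Z0 \<omega>\<bar>}) \<longlonglongrightarrow> 0)"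

definition is_stoch_integral :: "'a measure \<Rightarrow> real \<Rightarrow> real \<Rightarrow> (real \<Rightarrow> 'a \<Rightarrow> real) \<Rightarrow> (real \<Rightarrow> 'a \<Rightarrow> real) \<Rightarrow> ('a \<Rightarrow> real) \<Rightarrow> bool" where
  "is_stoch_integral M t T H X I \<longleftrightarrow> I \<in> borel_measurable M \<and>
     (\<forall>p N. partition_seq t T p N \<longrightarrow>
        conv_in_prob M (\<lambda>n \<omega>. \<Sum>k<N n. H (p n k) \<omega> * (X (p n (Suc k)) \<omega> - X (p n k) \<omega>)) I)"

text \<open>With H = 1 this is the quadratic
  covariation <X,Y>_{t,T}; with X = Y it is the integral against d<X>.\<close>
definition is_qcov_integral :: "'a measure \<Rightarrow> real \<Rightarrow> real \<Rightarrow> (real \<Rightarrow> 'a \<Rightarrow> real) \<Rightarrow> (real \<Rightarrow> 'a \<Rightarrow> real) \<Rightarrow> (real \<Rightarrow> 'a \<Rightarrow> real) \<Rightarrow> ('a \<Rightarrow> real) \<Rightarrow> bool" where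
  "is_qcov_integral M t T H X Y I \<longleftrightarrow> I \<in> borel_measurable M \<and>
     (\<forall>p N. partition_seq t T p N \<longrightarrow>
        conv_in_prob M (\<lambda>n \<omega>. \<Sum>k<N n. H (p n k) \<omega> * (X (p n (Suc k)) \<omega> - X (p n k) \<omega>)
                                     * (Y (p n (Suc k)) \<omega> - Y (p n k) \<omega>)) I)"

definition Ffun :: "real \<Rightarrow> real \<Rightarrow> real" where
  "Ffun z z0 = (z - z0) / z0 - ln (z / z0)"

definition Pi_ij :: "real \<Rightarrow> real \<Rightarrow> real \<Rightarrow> real \<Rightarrow> real \<Rightarrow> real \<Rightarrow> real" where
  "Pi_ij \<alpha> \<beta> x y K1 K2 =
     (max (K1 - x) 0 * (if K1 \<le> \<alpha> then 1 else 0) + max (x - K1) 0 * (if K1 > \<alpha> then 1 else 0)) *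
     (max (K2 - y) 0 * (if K2 \<le> \<beta> then 1 else 0) + max (y - K2) 0 * (if K2 > \<beta> then 1 else 0))"

definition Call :: "real \<Rightarrow> real \<Rightarrow> real" where "Call a z = max (z - a) 0"
definition Put :: "real \<Rightarrow> real \<Rightarrow> real" where "Put a z = max (a - z) 0"

end

theory Submission
  imports Defs
begin

text \<open>
  (a) is calculus: F(., z0) is the first-order Taylor remainder of -log at z0, and as the second
  derivative of -log is 1/K^2, it is a mixture of put payoffs (strikes below z0) and call payoffs
  (strikes above z0) with density 1/K^2; the product formula then follows by Tonelli.

  (b) is a discrete Ito formula. Along a partition, writing log (1 + r) = r - r^2/2 + R(r), the sum
  of products of the increments of log S^i and log S^j is exactly Y^i_T Y^j_T - Y^i_t Y^j_t minus
  the Riemann sums of the four integrals, up to two error sums of terms Y_k R(r_k), where r_k are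
  the relative increments of S. As |R(r)| <= 2 |r|^3, such an error sum is at most (max_k |r_k|)
  times a pathwise bound times the realised quadratic variation of S. The maximal increment tends
  to 0 by uniform continuity of the paths, and the realised quadratic variation of a continuous
  semimartingale is bounded in probability: the finite variation part contributes at most its
  squared total variation, and a local martingale is stopped and then compared with the Huber
  function, which equals x^2 on [-c, c] but has bounded derivative, so that the martingale
  property bounds the expected sums of its Taylor remainders by 2 c E|X_T|. Passing to the limit
  in probability along uniform partitions gives
  <Y^i, Y^j> = Y^i_T Y^j_T - Y^i_t Y^j_t - I1 - I2 + I3/2 + I4/2,
  which becomes (b) after substituting log x = log alpha + (x - alpha)/alpha - F(x, alpha).
  The last identity is x - a = C_a(x) - P_a(x).
\<close>

section \<open>Convergence and boundedness in probability\<close>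

definition bounded_in_prob :: "'a measure \<Rightarrow> (nat \<Rightarrow> 'a \<Rightarrow> real) \<Rightarrow> bool" where
  "bounded_in_prob M Z \<longleftrightarrow> (\<forall>e>0. \<exists>L. \<forall>n. measure M {\<omega>\<in>space M. L < \<bar>Z n \<omega>\<bar>} \<le> e)"

lemma conv_in_probD:
  "conv_in_prob M Z A \<Longrightarrow> 0 < e \<Longrightarrow> (\<lambda>n. measure M {\<omega>\<in>space M. e < \<bar>Z n \<omega> - A \<omega>\<bar>}) \<longlonglongrightarrow> 0"
  unfolding conv_in_prob_def by blast

lemma tendsto_0_if_eventually_le:
  fixes f :: "nat \<Rightarrow> real"
  assumes "\<And>n. 0 \<le> f n" and "\<And>d. 0 < d \<Longrightarrow> eventually (\<lambda>n. f n \<le> d) sequentially"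
  shows "f \<longlonglongrightarrow> 0"
proof (rule order_tendstoI)
  fix a :: real assume "0 < a"
  then have "eventually (\<lambda>n. f n \<le> a/2) sequentially" using assms(2)[of "a/2"] by simp
  then show "eventually (\<lambda>n. f n < a) sequentially"
    by (rule eventually_mono) (use \<open>0 < a\<close> in simp)
next
  fix a :: real assume "a < 0"
  then show "eventually (\<lambda>n. a < f n) sequentially"
    using assms(1) by (intro always_eventually) (metis less_le_trans)
qed

context prob_space begin

lemma prob_tendsto_0_if_AE_eventually_notin:
  assumes "\<And>n. G n \<in> events" and "AE \<omega> in M. eventually (\<lambda>n. \<omega> \<notin> G n) sequentially"
  shows "(\<lambda>n. prob (G n)) \<longlonglongrightarrow> 0"
proof -
  have "(\<lambda>n. \<integral>\<omega>. indicator (G n) \<omega> \<partial>M) \<longlonglongrightarrow> (\<integral>\<omega>. (0::real) \<partial>M)"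
  proof (rule integral_dominated_convergence[where w="\<lambda>_. 1"])
    show "AE \<omega> in M. (\<lambda>n. indicator (G n) \<omega> :: real) \<longlonglongrightarrow> 0"
      using assms(2)
    proof eventually_elim
      case (elim \<omega>)
      then have "eventually (\<lambda>n. indicator (G n) \<omega> = (0::real)) sequentially"
        by (rule eventually_mono) simp
      then show ?case by (rule tendsto_eventually)
    qed
  qed (use assms(1) in auto)
  then show ?thesis using assms(1) by simp
qed

lemma prob_le_AE_Un:
  assumes "A \<in> events" "B \<in> events" "C \<in> events" "AE \<omega> in M. \<omega> \<in> A \<longrightarrow> \<omega> \<in> B \<or> \<omega> \<in> C"
  shows "prob A \<le> prob B + prob C"
proof -
  have "prob A \<le> prob (B \<union> C)"
    by (rule finite_measure_mono_AE) (use assms in auto)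
  also have "\<dots> \<le> prob B + prob C" by (rule measure_Un_le) (use assms in auto)
  finally show ?thesis .
qed

lemma prob_le_AE_Un3:
  assumes "A \<in> events" "B \<in> events" "C \<in> events" "D \<in> events"
    "AE \<omega> in M. \<omega> \<in> A \<longrightarrow> \<omega> \<in> B \<or> \<omega> \<in> C \<or> \<omega> \<in> D"
  shows "prob A \<le> prob B + prob C + prob D"
proof -
  have "prob A \<le> prob (B \<union> C) + prob D"
    by (rule prob_le_AE_Un) (use assms in auto)
  also have "prob (B \<union> C) \<le> prob B + prob C" by (rule measure_Un_le) (use assms in auto)
  finally show ?thesis by simp
qed

lemma prob_gt_le_halves:
  fixes X Y Z :: "'a \<Rightarrow> real"
  assumes [measurable]: "X \<in> borel_measurable M" "Y \<in> borel_measurable M" "Z \<in> borel_measurable M"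
    and le: "\<And>\<omega>. \<bar>X \<omega>\<bar> \<le> \<bar>Y \<omega>\<bar> + \<bar>Z \<omega>\<bar>"
  shows "prob {\<omega> \<in> space M. e < \<bar>X \<omega>\<bar>} \<le> prob {\<omega> \<in> space M. e/2 < \<bar>Y \<omega>\<bar>} + prob {\<omega> \<in> space M. e/2 < \<bar>Z \<omega>\<bar>}"
proof (rule prob_le_AE_Un)
  show "AE \<omega> in M. \<omega> \<in> {\<omega> \<in> space M. e < \<bar>X \<omega>\<bar>} \<longrightarrow>
      \<omega> \<in> {\<omega> \<in> space M. e/2 < \<bar>Y \<omega>\<bar>} \<or> \<omega> \<in> {\<omega> \<in> space M. e/2 < \<bar>Z \<omega>\<bar>}"
  proof (intro AE_I2 impI)
    fix \<omega> assume "\<omega> \<in> {\<omega> \<in> space M. e < \<bar>X \<omega>\<bar>}"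
    with le[of \<omega>] show "\<omega> \<in> {\<omega> \<in> space M. e/2 < \<bar>Y \<omega>\<bar>} \<or> \<omega> \<in> {\<omega> \<in> space M. e/2 < \<bar>Z \<omega>\<bar>}"
      by auto
  qed
qed measurable

lemma conv_in_prob_if_AE_tendsto:
  assumes [measurable]: "\<And>n. Z n \<in> borel_measurable M" "A \<in> borel_measurable M"
    and lim: "AE \<omega> in M. (\<lambda>n. Z n \<omega>) \<longlonglongrightarrow> A \<omega>"
  shows "conv_in_prob M Z A"
  unfolding conv_in_prob_def
proof (intro allI impI)
  fix e :: real assume "0 < e"
  show "(\<lambda>n. prob {\<omega> \<in> space M. e < \<bar>Z n \<omega> - A \<omega>\<bar>}) \<longlonglongrightarrow> 0"
  proof (rule prob_tendsto_0_if_AE_eventually_notin)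
    show "AE \<omega> in M. eventually (\<lambda>n. \<omega> \<notin> {\<omega> \<in> space M. e < \<bar>Z n \<omega> - A \<omega>\<bar>}) sequentially"
      using lim
    proof eventually_elim
      case (elim \<omega>)
      then have "(\<lambda>n. Z n \<omega> - A \<omega>) \<longlonglongrightarrow> 0" by (simp add: LIM_zero)
      then have "eventually (\<lambda>n. norm (Z n \<omega> - A \<omega>) < e) sequentially"
        using \<open>0 < e\<close> by (rule order_tendstoD(2)[OF tendsto_norm_zero])
      then show ?case by (rule eventually_mono) auto
    qed
  qed measurable
qed

lemma conv_in_prob_const: "conv_in_prob M (\<lambda>n. A) A"
  unfolding conv_in_prob_def by simp

lemma conv_in_prob_add:
  assumes [measurable]: "\<And>n. Z n \<in> borel_measurable M" "\<And>n. W n \<in> borel_measurable M"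
    "A \<in> borel_measurable M" "B \<in> borel_measurable M"
    and "conv_in_prob M Z A" "conv_in_prob M W B"
  shows "conv_in_prob M (\<lambda>n \<omega>. Z n \<omega> + W n \<omega>) (\<lambda>\<omega>. A \<omega> + B \<omega>)"
  unfolding conv_in_prob_def
proof (intro allI impI)
  fix e :: real assume "0 < e"
  let ?P = "\<lambda>n. prob {\<omega> \<in> space M. e/2 < \<bar>Z n \<omega> - A \<omega>\<bar>} + prob {\<omega> \<in> space M. e/2 < \<bar>W n \<omega> - B \<omega>\<bar>}"
  have lim: "?P \<longlonglongrightarrow> 0"
    using tendsto_add[OF assms(5,6)[THEN conv_in_probD, of "e/2"]] \<open>0 < e\<close> by simp
  have le: "prob {\<omega> \<in> space M. e < \<bar>Z n \<omega> + W n \<omega> - (A \<omega> + B \<omega>)\<bar>} \<le> ?P n" for n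
    by (rule prob_gt_le_halves; (measurable | linarith))
  show "(\<lambda>n. prob {\<omega> \<in> space M. e < \<bar>Z n \<omega> + W n \<omega> - (A \<omega> + B \<omega>)\<bar>}) \<longlonglongrightarrow> 0"
    by (rule tendsto_sandwich[OF _ _ tendsto_const lim]) (use le in simp_all)
qed

lemma conv_in_prob_cmult:
  assumes "conv_in_prob M Z A"
  shows "conv_in_prob M (\<lambda>n \<omega>. c * Z n \<omega>) (\<lambda>\<omega>. c * A \<omega>)"
proof (cases "c = 0")
  case False
  have "{\<omega> \<in> space M. e < \<bar>c * Z n \<omega> - c * A \<omega>\<bar>} = {\<omega> \<in> space M. e / \<bar>c\<bar> < \<bar>Z n \<omega> - A \<omega>\<bar>}" for e n
    using False by (auto simp: right_diff_distrib[symmetric] abs_mult divide_less_eq mult.commute)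
  then show ?thesis using assms False unfolding conv_in_prob_def by simp
qed (simp add: conv_in_prob_def)

lemma conv_in_prob_diff:
  assumes [measurable]: "\<And>n. Z n \<in> borel_measurable M" "\<And>n. W n \<in> borel_measurable M"
    "A \<in> borel_measurable M" "B \<in> borel_measurable M"
    and "conv_in_prob M Z A" "conv_in_prob M W B"
  shows "conv_in_prob M (\<lambda>n \<omega>. Z n \<omega> - W n \<omega>) (\<lambda>\<omega>. A \<omega> - B \<omega>)"
  using conv_in_prob_add[OF _ _ _ _ assms(5) conv_in_prob_cmult[OF assms(6), of "-1"]] by simp

lemma conv_in_prob_unique:
  assumes [measurable]: "\<And>n. Z n \<in> borel_measurable M" "A \<in> borel_measurable M" "B \<in> borel_measurable M"
    and "conv_in_prob M Z A" "conv_in_prob M Z B"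
  shows "AE \<omega> in M. A \<omega> = B \<omega>"
proof -
  have null: "prob {\<omega> \<in> space M. e < \<bar>A \<omega> - B \<omega>\<bar>} = 0" if "0 < e" for e
  proof -
    have lim: "(\<lambda>n. prob {\<omega> \<in> space M. e/2 < \<bar>Z n \<omega> - A \<omega>\<bar>} + prob {\<omega> \<in> space M. e/2 < \<bar>Z n \<omega> - B \<omega>\<bar>}) \<longlonglongrightarrow> 0"
      using tendsto_add[OF assms(4,5)[THEN conv_in_probD, of "e/2"]] that by simp
    have le: "prob {\<omega> \<in> space M. e < \<bar>A \<omega> - B \<omega>\<bar>} \<le>
        prob {\<omega> \<in> space M. e/2 < \<bar>Z n \<omega> - A \<omega>\<bar>} + prob {\<omega> \<in> space M. e/2 < \<bar>Z n \<omega> - B \<omega>\<bar>}" for n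
      by (rule prob_gt_le_halves; (measurable | linarith))
    have "prob {\<omega> \<in> space M. e < \<bar>A \<omega> - B \<omega>\<bar>} \<le> 0"
      by (rule tendsto_le[OF sequentially_bot lim tendsto_const]) (use le in simp)
    then show ?thesis by (simp add: measure_le_0_iff)
  qed
  have "AE \<omega> in M. \<forall>m::nat. \<bar>A \<omega> - B \<omega>\<bar> \<le> 1 / Suc m"
  proof (subst AE_all_countable, intro allI)
    fix m :: nat
    have "AE \<omega> in M. \<omega> \<notin> {\<omega> \<in> space M. 1 / Suc m < \<bar>A \<omega> - B \<omega>\<bar>}"
      using null[of "1 / Suc m"] by (subst prob_eq_0[symmetric]) auto
    then show "AE \<omega> in M. \<bar>A \<omega> - B \<omega>\<bar> \<le> 1 / Suc m"
      by (rule AE_mp) (auto intro!: AE_I2)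
  qed
  then show ?thesis
  proof eventually_elim
    case (elim \<omega>)
    have "\<bar>A \<omega> - B \<omega>\<bar> \<le> 0"
    proof (rule field_le_epsilon)
      fix d :: real assume "0 < d"
      then obtain m :: nat where "1 / Suc m < d"
        using nat_approx_posE by blast
      then show "\<bar>A \<omega> - B \<omega>\<bar> \<le> 0 + d" using elim[rule_format, of m] by linarith
    qed
    then show ?case by simp
  qed
qed

lemma conv_in_prob_AE_cong:
  assumes [measurable]: "\<And>n. Z n \<in> borel_measurable M" "\<And>n. Z' n \<in> borel_measurable M" "A \<in> borel_measurable M"
    and "conv_in_prob M Z A" and eq: "\<And>n. AE \<omega> in M. Z n \<omega> = Z' n \<omega>"
  shows "conv_in_prob M Z' A"
proof -
  have "prob {\<omega> \<in> space M. e < \<bar>Z' n \<omega> - A \<omega>\<bar>} = prob {\<omega> \<in> space M. e < \<bar>Z n \<omega> - A \<omega>\<bar>}" for e n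
  proof (rule measure_eq_AE)
    show "AE \<omega> in M. (\<omega> \<in> {\<omega> \<in> space M. e < \<bar>Z' n \<omega> - A \<omega>\<bar>}) = (\<omega> \<in> {\<omega> \<in> space M. e < \<bar>Z n \<omega> - A \<omega>\<bar>})"
      using eq[of n] by eventually_elim auto
  qed measurable
  then show ?thesis using assms(4) unfolding conv_in_prob_def by simp
qed

lemma bounded_in_prob_pos_bound:
  assumes "bounded_in_prob M Z" "0 < e" and [measurable]: "\<And>n. Z n \<in> borel_measurable M"
  obtains L where "0 < L" "\<And>n. prob {\<omega>\<in>space M. L < \<bar>Z n \<omega>\<bar>} \<le> e"
proof -
  obtain L where L: "\<And>n. prob {\<omega>\<in>space M. L < \<bar>Z n \<omega>\<bar>} \<le> e"
    using assms unfolding bounded_in_prob_def by blast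
  have "prob {\<omega>\<in>space M. max L 0 + 1 < \<bar>Z n \<omega>\<bar>} \<le> prob {\<omega>\<in>space M. L < \<bar>Z n \<omega>\<bar>}" for n
    by (rule finite_measure_mono_AE) auto
  then show ?thesis using L by (intro that[of "max L 0 + 1"]) (auto intro: order_trans)
qed

lemma bounded_in_prob_localize:
  assumes [measurable]: "\<And>n. Z n \<in> borel_measurable M" "\<And>m n. Z' m n \<in> borel_measurable M"
    and G: "\<And>m. G m \<in> events" "(\<lambda>m. prob (G m)) \<longlonglongrightarrow> 0"
    and bounded: "\<And>m. bounded_in_prob M (Z' m)"
    and le: "\<And>m n \<omega>. \<omega> \<in> space M - G m \<Longrightarrow> \<bar>Z n \<omega>\<bar> \<le> \<bar>Z' m n \<omega>\<bar>"
  shows "bounded_in_prob M Z"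
  unfolding bounded_in_prob_def
proof (intro allI impI)
  fix e :: real assume "0 < e"
  then obtain m where m: "prob (G m) < e/2"
    using order_tendstoD(2)[OF G(2), of "e/2"] by (auto simp: eventually_sequentially)
  obtain L where L: "\<And>n. prob {\<omega>\<in>space M. L < \<bar>Z' m n \<omega>\<bar>} \<le> e/2"
    using bounded[of m] \<open>0 < e\<close> unfolding bounded_in_prob_def by (meson half_gt_zero)
  have split: "prob {\<omega>\<in>space M. L < \<bar>Z n \<omega>\<bar>} \<le> prob (G m) + prob {\<omega>\<in>space M. L < \<bar>Z' m n \<omega>\<bar>}" for n
  proof (rule prob_le_AE_Un)
    show "AE \<omega> in M. \<omega> \<in> {\<omega>\<in>space M. L < \<bar>Z n \<omega>\<bar>} \<longrightarrow> \<omega> \<in> G m \<or> \<omega> \<in> {\<omega>\<in>space M. L < \<bar>Z' m n \<omega>\<bar>}"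
      using le[of _ m n] by (intro AE_I2) force
  qed (use G(1) in measurable)
  have "prob {\<omega>\<in>space M. L < \<bar>Z n \<omega>\<bar>} \<le> e" for n
    using split[of n] m L[of n] by linarith
  then show "\<exists>L. \<forall>n. prob {\<omega>\<in>space M. L < \<bar>Z n \<omega>\<bar>} \<le> e" by blast
qed

lemma bounded_in_prob_if_AE_bounded:
  assumes [measurable]: "\<And>n. Z n \<in> borel_measurable M"
    and bounded: "AE \<omega> in M. \<exists>B. \<forall>n. \<bar>Z n \<omega>\<bar> \<le> B"
  shows "bounded_in_prob M Z"
proof -
  let ?G = "\<lambda>m::nat. {\<omega>\<in>space M. \<exists>n. real m < \<bar>Z n \<omega>\<bar>}"
  show ?thesis
  proof (rule bounded_in_prob_localize[where G="?G" and Z'="\<lambda>m n \<omega>. real m"])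
    show "?G m \<in> events" for m by measurable
    show "(\<lambda>m. prob (?G m)) \<longlonglongrightarrow> 0"
    proof (rule prob_tendsto_0_if_AE_eventually_notin)
      show "AE \<omega> in M. eventually (\<lambda>m. \<omega> \<notin> ?G m) sequentially"
        using bounded
      proof eventually_elim
        case (elim \<omega>)
        then obtain B where B: "\<And>n. \<bar>Z n \<omega>\<bar> \<le> B" by blast
        obtain m0 :: nat where "B \<le> real m0" using real_arch_simple by blast
        then have "\<bar>Z n \<omega>\<bar> \<le> real m" if "m0 \<le> m" for m n
          using B[of n] \<open>B \<le> real m0\<close> that by (meson order_trans of_nat_le_iff)
        then show ?case
          unfolding eventually_sequentially by (intro exI[of _ m0]) (auto simp: not_less)
      qed
    qed measurable
    show "bounded_in_prob M (\<lambda>n \<omega>. real m)" for m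
      unfolding bounded_in_prob_def by (intro allI impI exI[of _ "real m"]) simp
  qed (auto simp: not_less)
qed

lemma bounded_in_prob_if_integral_le:
  assumes int: "\<And>n. integrable M (Z n)" and nonneg: "\<And>n \<omega>. 0 \<le> Z n \<omega>"
    and le: "\<And>n. (\<integral>\<omega>. Z n \<omega> \<partial>M) \<le> K"
  shows "bounded_in_prob M Z"
  unfolding bounded_in_prob_def
proof (intro allI impI)
  fix e :: real assume "0 < e"
  define L where "L = max K 0 / e + 1"
  have "0 < L" unfolding L_def using \<open>0 < e\<close> by (simp add: add_nonneg_pos)
  have "prob {\<omega>\<in>space M. L < \<bar>Z n \<omega>\<bar>} \<le> e" for n
  proof -
    have "prob {\<omega>\<in>space M. L < \<bar>Z n \<omega>\<bar>} \<le> prob {\<omega>\<in>space M. L \<le> Z n \<omega>}"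
      using int[of n] nonneg by (intro finite_measure_mono) auto
    also have "\<dots> \<le> (\<integral>\<omega>. Z n \<omega> \<partial>M) / L"
      using nonneg by (intro integral_Markov_inequality_measure[OF int _ _ \<open>0 < L\<close>, of "space M"]) auto
    also have "\<dots> \<le> max K 0 / L"
      using le[of n] \<open>0 < L\<close> by (intro divide_right_mono) auto
    also have "\<dots> \<le> e"
      using \<open>0 < e\<close> \<open>0 < L\<close> unfolding L_def by (simp add: divide_le_eq field_simps)
    finally show ?thesis .
  qed
  then show "\<exists>L. \<forall>n. prob {\<omega>\<in>space M. L < \<bar>Z n \<omega>\<bar>} \<le> e" by blast
qed

lemma bounded_in_prob_mono2:
  assumes [measurable]: "\<And>n. Z n \<in> borel_measurable M" "\<And>n. U n \<in> borel_measurable M"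
    "\<And>n. V n \<in> borel_measurable M"
    and "bounded_in_prob M U" "bounded_in_prob M V"
    and mono: "\<And>a b c d. 0 \<le> a \<Longrightarrow> a \<le> c \<Longrightarrow> 0 \<le> b \<Longrightarrow> b \<le> d \<Longrightarrow> f a b \<le> f c d"
    and le: "\<And>n. AE \<omega> in M. \<bar>Z n \<omega>\<bar> \<le> f \<bar>U n \<omega>\<bar> \<bar>V n \<omega>\<bar>"
  shows "bounded_in_prob M Z"
  unfolding bounded_in_prob_def
proof (intro allI impI)
  fix e :: real assume "0 < e"
  then obtain L1 L2 where L1: "\<And>n. prob {\<omega>\<in>space M. L1 < \<bar>U n \<omega>\<bar>} \<le> e/2"
    and L2: "\<And>n. prob {\<omega>\<in>space M. L2 < \<bar>V n \<omega>\<bar>} \<le> e/2"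
    using assms(4,5) unfolding bounded_in_prob_def by (meson half_gt_zero)
  have split: "prob {\<omega>\<in>space M. f L1 L2 < \<bar>Z n \<omega>\<bar>} \<le>
      prob {\<omega>\<in>space M. L1 < \<bar>U n \<omega>\<bar>} + prob {\<omega>\<in>space M. L2 < \<bar>V n \<omega>\<bar>}" for n
  proof (rule prob_le_AE_Un)
    show "AE \<omega> in M. \<omega> \<in> {\<omega>\<in>space M. f L1 L2 < \<bar>Z n \<omega>\<bar>} \<longrightarrow>
        \<omega> \<in> {\<omega>\<in>space M. L1 < \<bar>U n \<omega>\<bar>} \<or> \<omega> \<in> {\<omega>\<in>space M. L2 < \<bar>V n \<omega>\<bar>}"
      using le[of n]
    proof eventually_elim
      case (elim \<omega>)
      then show ?case using mono[of "\<bar>U n \<omega>\<bar>" L1 "\<bar>V n \<omega>\<bar>" L2] by force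
    qed
  qed measurable
  have "prob {\<omega>\<in>space M. f L1 L2 < \<bar>Z n \<omega>\<bar>} \<le> e" for n
    using split[of n] L1[of n] L2[of n] by linarith
  then show "\<exists>L. \<forall>n. prob {\<omega>\<in>space M. L < \<bar>Z n \<omega>\<bar>} \<le> e" by blast
qed

lemma bounded_in_prob_mult:
  assumes [measurable]: "\<And>n. Z n \<in> borel_measurable M" "\<And>n. U n \<in> borel_measurable M"
    "\<And>n. V n \<in> borel_measurable M"
    and "bounded_in_prob M U" "bounded_in_prob M V"
    and "\<And>n. AE \<omega> in M. \<bar>Z n \<omega>\<bar> \<le> \<bar>U n \<omega>\<bar> * \<bar>V n \<omega>\<bar>"
  shows "bounded_in_prob M Z"
  by (rule bounded_in_prob_mono2[where f="(*)", OF assms(1-5)]) (use assms(6) in \<open>auto intro: mult_mono\<close>)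

lemma bounded_in_prob_add:
  assumes [measurable]: "\<And>n. Z n \<in> borel_measurable M" "\<And>n. U n \<in> borel_measurable M"
    "\<And>n. V n \<in> borel_measurable M"
    and "bounded_in_prob M U" "bounded_in_prob M V"
    and "\<And>n. AE \<omega> in M. \<bar>Z n \<omega>\<bar> \<le> \<bar>U n \<omega>\<bar> + \<bar>V n \<omega>\<bar>"
  shows "bounded_in_prob M Z"
  by (rule bounded_in_prob_mono2[where f="(+)", OF assms(1-5)]) (use assms(6) in auto)

lemma bounded_in_prob_cmult:
  assumes [measurable]: "\<And>n. Z n \<in> borel_measurable M" and "bounded_in_prob M Z"
  shows "bounded_in_prob M (\<lambda>n \<omega>. c * Z n \<omega>)"
proof (rule bounded_in_prob_mult[where U="\<lambda>n \<omega>. c" and V=Z])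
  show "bounded_in_prob M (\<lambda>n \<omega>. c)" by (rule bounded_in_prob_if_AE_bounded) auto
qed (use assms in \<open>auto simp: abs_mult\<close>)

lemma conv_in_prob_zero_if_le_mult:
  assumes [measurable]: "\<And>n. Z n \<in> borel_measurable M" "\<And>n. U n \<in> borel_measurable M"
    "\<And>n. W n \<in> borel_measurable M"
    and U: "bounded_in_prob M U" and W: "conv_in_prob M W (\<lambda>_. 0)" and "0 < \<delta>"
    and le: "\<And>n. AE \<omega> in M. \<bar>W n \<omega>\<bar> \<le> \<delta> \<longrightarrow> \<bar>Z n \<omega>\<bar> \<le> \<bar>U n \<omega>\<bar> * \<bar>W n \<omega>\<bar>"
  shows "conv_in_prob M Z (\<lambda>_. 0)"
  unfolding conv_in_prob_def
proof (intro allI impI)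
  fix e :: real assume "0 < e"
  show "(\<lambda>n. prob {\<omega> \<in> space M. e < \<bar>Z n \<omega> - 0\<bar>}) \<longlonglongrightarrow> 0"
  proof (rule tendsto_0_if_eventually_le)
    fix d :: real assume "0 < d"
    obtain L where L: "0 < L" "\<And>n. prob {\<omega>\<in>space M. L < \<bar>U n \<omega>\<bar>} \<le> d/2"
      using bounded_in_prob_pos_bound[OF U, of "d/2"] \<open>0 < d\<close> by auto
    let ?P = "\<lambda>n. prob {\<omega> \<in> space M. \<delta> < \<bar>W n \<omega> - 0\<bar>} + prob {\<omega> \<in> space M. e/L < \<bar>W n \<omega> - 0\<bar>}"
    have "?P \<longlonglongrightarrow> 0"
      using tendsto_add[OF W[THEN conv_in_probD, of \<delta>] W[THEN conv_in_probD, of "e/L"]]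
        \<open>0 < \<delta>\<close> \<open>0 < e\<close> L(1) by simp
    then have "eventually (\<lambda>n. ?P n < d/2) sequentially"
      using \<open>0 < d\<close> by (intro order_tendstoD) auto
    then show "eventually (\<lambda>n. prob {\<omega> \<in> space M. e < \<bar>Z n \<omega> - 0\<bar>} \<le> d) sequentially"
    proof (rule eventually_mono)
      fix n assume n: "?P n < d/2"
      have "prob {\<omega> \<in> space M. e < \<bar>Z n \<omega> - 0\<bar>} \<le> prob {\<omega> \<in> space M. \<delta> < \<bar>W n \<omega> - 0\<bar>}
         + prob {\<omega>\<in>space M. L < \<bar>U n \<omega>\<bar>} + prob {\<omega> \<in> space M. e/L < \<bar>W n \<omega> - 0\<bar>}"
      proof (rule prob_le_AE_Un3)
        show "AE \<omega> in M. \<omega> \<in> {\<omega> \<in> space M. e < \<bar>Z n \<omega> - 0\<bar>} \<longrightarrow> \<omega> \<in> {\<omega> \<in> space M. \<delta> < \<bar>W n \<omega> - 0\<bar>}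
            \<or> \<omega> \<in> {\<omega>\<in>space M. L < \<bar>U n \<omega>\<bar>} \<or> \<omega> \<in> {\<omega> \<in> space M. e/L < \<bar>W n \<omega> - 0\<bar>}"
          using le[of n]
        proof eventually_elim
          case (elim \<omega>)
          have "\<bar>U n \<omega>\<bar> * \<bar>W n \<omega>\<bar> \<le> L * (e/L)" if "\<bar>U n \<omega>\<bar> \<le> L" "\<bar>W n \<omega>\<bar> \<le> e/L"
            using that by (intro mult_mono) auto
          then show ?case using elim L(1) by force
        qed
      qed measurable
      then show "prob {\<omega> \<in> space M. e < \<bar>Z n \<omega> - 0\<bar>} \<le> d" using n L(2)[of n] by linarith
    qed
  qed simp
qed

end

section \<open>Partitions and continuous paths\<close>

lemma bounded_on_Icc_if_continuous:
  fixes f :: "real \<Rightarrow> real"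
  assumes "continuous_on {t..T} f"
  obtains B where "0 \<le> B" "\<And>u. u \<in> {t..T} \<Longrightarrow> \<bar>f u\<bar> \<le> B"
proof -
  have "bounded (f ` {t..T})" by (rule compact_imp_bounded[OF compact_continuous_image[OF assms]]) simp
  then obtain B where "\<forall>u\<in>{t..T}. \<bar>f u\<bar> \<le> B" by (auto simp: bounded_iff)
  then show ?thesis by (intro that[of "max B 0"]) (auto intro: le_max_iff_disj[THEN iffD2])
qed

lemma partition_seq_mono:
  assumes "partition_seq t T p N" "i \<le> j" "j \<le> N n"
  shows "p n i \<le> p n j"
  using assms(2,3)
proof (induction j)
  case (Suc j)
  show ?case
  proof (cases "i = Suc j")
    case False
    then have "p n i \<le> p n j" using Suc by simp
    moreover have "p n j < p n (Suc j)" using assms(1) Suc.prems unfolding partition_seq_def by auto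
    ultimately show ?thesis by simp
  qed simp
qed simp

lemma partition_seq_in:
  assumes "partition_seq t T p N" "k \<le> N n"
  shows "p n k \<in> {t..T}"
proof -
  have "p n 0 \<le> p n k" "p n k \<le> p n (N n)" using partition_seq_mono[OF assms(1)] assms(2) by auto
  then show ?thesis using assms(1) unfolding partition_seq_def by auto
qed

lemma partition_seq_length_pos:
  assumes "partition_seq t T p N" "t < T"
  shows "0 < N n"
  using assms unfolding partition_seq_def by (metis gr0I less_irrefl)

lemma partition_seq_max_increment_tendsto_0:
  fixes f :: "real \<Rightarrow> real"
  assumes P: "partition_seq t T p N" and "t < T" and f: "continuous_on {t..T} f"
  shows "(\<lambda>n. Max ((\<lambda>k. \<bar>f (p n (Suc k)) - f (p n k)\<bar>) ` {..<N n})) \<longlonglongrightarrow> 0"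
proof (rule order_tendstoI)
  fix a :: real assume "0 < a"
  obtain d where "0 < d" and d: "\<And>x x'. x \<in> {t..T} \<Longrightarrow> x' \<in> {t..T} \<Longrightarrow> dist x' x < d \<Longrightarrow> dist (f x') (f x) < a"
    using compact_uniformly_continuous[OF f compact_Icc] \<open>0 < a\<close> unfolding uniformly_continuous_on_def by metis
  have "(\<lambda>n. Max ((\<lambda>k. p n (Suc k) - p n k) ` {..<N n})) \<longlonglongrightarrow> 0"
    using P unfolding partition_seq_def by blast
  then have "eventually (\<lambda>n. Max ((\<lambda>k. p n (Suc k) - p n k) ` {..<N n}) < d) sequentially"
    using \<open>0 < d\<close> by (rule order_tendstoD)
  then show "eventually (\<lambda>n. Max ((\<lambda>k. \<bar>f (p n (Suc k)) - f (p n k)\<bar>) ` {..<N n}) < a) sequentially"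
  proof (rule eventually_mono)
    fix n assume mesh: "Max ((\<lambda>k. p n (Suc k) - p n k) ` {..<N n}) < d"
    have "\<bar>f (p n (Suc k)) - f (p n k)\<bar> < a" if "k < N n" for k
    proof -
      have "p n (Suc k) - p n k \<le> Max ((\<lambda>k. p n (Suc k) - p n k) ` {..<N n})"
        using that by (intro Max_ge) auto
      moreover have "p n k \<le> p n (Suc k)" using partition_seq_mono[OF P, of k "Suc k" n] that by simp
      ultimately have "dist (p n (Suc k)) (p n k) < d" using mesh by (simp add: dist_real_def)
      then show ?thesis
        using d partition_seq_in[OF P, of k n] partition_seq_in[OF P, of "Suc k" n] that
        by (simp add: dist_real_def)
    qed
    then show "Max ((\<lambda>k. \<bar>f (p n (Suc k)) - f (p n k)\<bar>) ` {..<N n}) < a"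
      using partition_seq_length_pos[OF P \<open>t < T\<close>] by (subst Max_less_iff) auto
  qed
next
  fix a :: real assume "a < 0"
  have "0 \<le> Max ((\<lambda>k. \<bar>f (p n (Suc k)) - f (p n k)\<bar>) ` {..<N n})" for n
    using partition_seq_length_pos[OF P \<open>t < T\<close>, of n] by (intro order_trans[OF _ Max_ge[of _ "\<bar>f (p n 1) - f (p n 0)\<bar>"]]) auto
  then show "eventually (\<lambda>n. a < Max ((\<lambda>k. \<bar>f (p n (Suc k)) - f (p n k)\<bar>) ` {..<N n})) sequentially"
    using \<open>a < 0\<close> by (intro always_eventually allI) (meson less_le_trans)
qed

lemma partition_seq_uniform:
  fixes t T :: real
  assumes "t < T"
  shows "partition_seq t T (\<lambda>n k. t + real k * (T - t) / real (Suc n)) Suc"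
proof -
  have step: "t + real (Suc k) * (T - t) / real (Suc n) - (t + real k * (T - t) / real (Suc n))
      = (T - t) / real (Suc n)" for n k
    by (simp add: distrib_right add_divide_distrib)
  have "(\<lambda>n. (T - t) / real (Suc n)) \<longlonglongrightarrow> 0"
    using tendsto_mult[OF tendsto_const[of "T - t"] LIMSEQ_inverse_real_of_nat] by (simp add: divide_inverse)
  moreover have "t + real k * (T - t) / real (Suc n) < t + real (Suc k) * (T - t) / real (Suc n)" for n k
    using step[of k n] divide_pos_pos[of "T - t" "real (Suc n)"] assms by linarith
  ultimately show ?thesis
    unfolding partition_seq_def step by (auto simp: image_constant_conv lessThan_empty_iff)
qed

lemma partition_seq_cong:
  assumes "\<And>n k. k \<le> N n \<Longrightarrow> p n k = q n k"
  shows "partition_seq t T p N \<longleftrightarrow> partition_seq t T q N"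
proof -
  have "(\<lambda>k. p n (Suc k) - p n k) ` {..<N n} = (\<lambda>k. q n (Suc k) - q n k) ` {..<N n}" for n
    using assms by (intro image_cong) auto
  then show ?thesis
    unfolding partition_seq_def using assms by (auto simp: Suc_leI)
qed

lemma partition_seq_uniform_min:
  fixes t T :: real
  assumes "t < T"
  shows "partition_seq t T (\<lambda>n k. min T (t + real k * (T - t) / real (Suc n))) Suc"
proof -
  have "t + real k * (T - t) / real (Suc n) \<le> T" if "k \<le> Suc n" for n k
  proof -
    have "real k * (T - t) \<le> real (Suc n) * (T - t)"
      using that assms by (intro mult_right_mono) auto
    then have "real k * (T - t) / real (Suc n) \<le> T - t" by (simp add: divide_le_eq mult.commute)
    then show ?thesis by simp
  qed
  then show ?thesis
    using partition_seq_uniform[OF assms] by (subst partition_seq_cong) auto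
qed

section \<open>Quadratic variation sums of continuous semimartingales\<close>

text \<open>Agrees with x^2 on [-c, c] but has bounded derivative, so that its Taylor remainders along a
  merely integrable martingale have controlled expectations.\<close>

definition huber :: "real \<Rightarrow> real \<Rightarrow> real" where
  "huber c x = (if \<bar>x\<bar> \<le> c then x^2 else 2 * c * \<bar>x\<bar> - c^2)"

definition huber_deriv :: "real \<Rightarrow> real \<Rightarrow> real" where
  "huber_deriv c x = 2 * max (-c) (min c x)"

lemma huber_measurable [measurable]:
  assumes [measurable]: "f \<in> borel_measurable M"
  shows "(\<lambda>\<omega>. huber c (f \<omega>)) \<in> borel_measurable M"
  unfolding huber_def by measurable

lemma huber_deriv_measurable [measurable]:
  assumes [measurable]: "f \<in> borel_measurable M"
  shows "(\<lambda>\<omega>. huber_deriv c (f \<omega>)) \<in> borel_measurable M"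
  unfolding huber_deriv_def by measurable

lemma huber_nonneg: "0 \<le> c \<Longrightarrow> 0 \<le> huber c x"
  unfolding huber_def by (auto simp: power2_eq_square intro: mult_mono)

lemma huber_le:
  assumes "0 \<le> c"
  shows "huber c x \<le> 2 * c * \<bar>x\<bar>"
proof (cases "\<bar>x\<bar> \<le> c")
  case True
  then have "huber c x = x^2" by (simp add: huber_def)
  also have "\<dots> \<le> c * \<bar>x\<bar>"
    using mult_right_mono[OF True abs_ge_zero[of x]] by (simp add: power2_eq_square)
  also have "\<dots> \<le> 2 * c * \<bar>x\<bar>"
    using assms by (intro mult_right_mono) auto
  finally show ?thesis .
qed (simp add: huber_def)

lemma abs_huber_deriv_le: "0 \<le> c \<Longrightarrow> \<bar>huber_deriv c x\<bar> \<le> 2 * c"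
  unfolding huber_deriv_def by auto

lemma huber_taylor_eq_square:
  "\<bar>x\<bar> \<le> c \<Longrightarrow> \<bar>y\<bar> \<le> c \<Longrightarrow> huber c y - huber c x - huber_deriv c x * (y - x) = (y - x)^2"
  unfolding huber_def huber_deriv_def by (auto simp: power2_eq_square algebra_simps)

lemma huber_convex_first_order:
  assumes "0 \<le> c"
  shows "0 \<le> huber c y - huber c x - huber_deriv c x * (y - x)"
proof -
  define a b where "a = max (-c) (min c x)" and "b = max (-c) (min c y)"
  have hx: "huber c x = 2 * a * x - a^2" and hy: "huber c y = 2 * b * y - b^2"
    using assms unfolding huber_def a_def b_def by (auto simp: power2_eq_square abs_if)
  \<comment> \<open>b is the projection of y onto [-c, c], which contains a\<close>
  have "0 \<le> (b - a) * (y - b)"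
  proof -
    consider "y < -c" | "c < y" | "\<bar>y\<bar> \<le> c" by linarith
    then show ?thesis
      using assms by cases (auto simp: a_def b_def intro: mult_nonneg_nonneg mult_nonpos_nonpos)
  qed
  moreover have "huber c y - huber c x - huber_deriv c x * (y - x) = (a - b)^2 + 2 * ((b - a) * (y - b))"
    unfolding hx hy huber_deriv_def a_def[symmetric] by (simp add: power2_eq_square algebra_simps)
  ultimately show ?thesis by simp
qed

definition quadratic_variation_sum ::
    "(real \<Rightarrow> 'a \<Rightarrow> real) \<Rightarrow> (nat \<Rightarrow> nat \<Rightarrow> real) \<Rightarrow> (nat \<Rightarrow> nat) \<Rightarrow> nat \<Rightarrow> 'a \<Rightarrow> real" where
  "quadratic_variation_sum X p N n \<omega> = (\<Sum>k<N n. (X (p n (Suc k)) \<omega> - X (p n k) \<omega>)^2)"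

definition huber_remainder_sum ::
    "real \<Rightarrow> (real \<Rightarrow> 'a \<Rightarrow> real) \<Rightarrow> (nat \<Rightarrow> nat \<Rightarrow> real) \<Rightarrow> (nat \<Rightarrow> nat) \<Rightarrow> nat \<Rightarrow> 'a \<Rightarrow> real" where
  "huber_remainder_sum c X p N n \<omega> = (\<Sum>k<N n. huber c (X (p n (Suc k)) \<omega>) - huber c (X (p n k) \<omega>)
      - huber_deriv c (X (p n k) \<omega>) * (X (p n (Suc k)) \<omega> - X (p n k) \<omega>))"

lemma quadratic_variation_sum_nonneg: "0 \<le> quadratic_variation_sum X p N n \<omega>"
  unfolding quadratic_variation_sum_def by (simp add: sum_nonneg)

lemma huber_remainder_sum_nonneg: "0 \<le> c \<Longrightarrow> 0 \<le> huber_remainder_sum c X p N n \<omega>"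
  unfolding huber_remainder_sum_def by (intro sum_nonneg huber_convex_first_order)

lemma quadratic_variation_sum_eq_huber_remainder_sum:
  assumes "\<And>k. k \<le> N n \<Longrightarrow> \<bar>X (p n k) \<omega>\<bar> \<le> c"
  shows "quadratic_variation_sum X p N n \<omega> = huber_remainder_sum c X p N n \<omega>"
  unfolding quadratic_variation_sum_def huber_remainder_sum_def
  by (intro sum.cong refl huber_taylor_eq_square[symmetric] assms) auto

lemma sum_power2_le_power2_sum_abs:
  fixes a :: "nat \<Rightarrow> real"
  shows "(\<Sum>k<n. (a k)^2) \<le> (\<Sum>k<n. \<bar>a k\<bar>)^2"
proof -
  have "(a k)^2 \<le> \<bar>a k\<bar> * (\<Sum>k<n. \<bar>a k\<bar>)" if "k < n" for k
    using that mult_left_mono[OF member_le_sum[of k "{..<n}" "\<lambda>k. \<bar>a k\<bar>"] abs_ge_zero[of "a k"]]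
    by (simp add: power2_eq_square abs_mult[symmetric])
  then have "(\<Sum>k<n. (a k)^2) \<le> (\<Sum>k<n. \<bar>a k\<bar> * (\<Sum>k<n. \<bar>a k\<bar>))" by (intro sum_mono) auto
  then show ?thesis by (simp add: sum_distrib_right power2_eq_square)
qed

lemma quadratic_variation_sum_add_le:
  assumes "\<And>k. k \<le> N n \<Longrightarrow> S (p n k) \<omega> = c + X (p n k) \<omega> + A (p n k) \<omega>"
  shows "quadratic_variation_sum S p N n \<omega>
    \<le> 2 * quadratic_variation_sum X p N n \<omega> + 2 * quadratic_variation_sum A p N n \<omega>"
proof -
  have "(S (p n (Suc k)) \<omega> - S (p n k) \<omega>)^2
      \<le> 2 * (X (p n (Suc k)) \<omega> - X (p n k) \<omega>)^2 + 2 * (A (p n (Suc k)) \<omega> - A (p n k) \<omega>)^2"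
    if "k < N n" for k
  proof -
    have "S (p n (Suc k)) \<omega> - S (p n k) \<omega>
        = (X (p n (Suc k)) \<omega> - X (p n k) \<omega>) + (A (p n (Suc k)) \<omega> - A (p n k) \<omega>)"
      using assms[of k] assms[of "Suc k"] that by simp
    moreover have "(a + b)^2 \<le> 2 * a^2 + 2 * b^2" for a b :: real
      using sum_squares_ge_zero[of "a - b" 0] by (simp add: power2_eq_square algebra_simps)
    ultimately show ?thesis by simp
  qed
  then show ?thesis
    unfolding quadratic_variation_sum_def sum_distrib_left sum.distrib[symmetric]
    by (intro sum_mono) auto
qed

lemma is_filtration_measurable:
  "is_filtration M F \<Longrightarrow> f \<in> borel_measurable (F s) \<Longrightarrow> f \<in> borel_measurable M"
  unfolding is_filtration_def using measurable_from_subalg by blast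

lemma adapted_on_measurable:
  "is_filtration M F \<Longrightarrow> adapted_on F t T X \<Longrightarrow> u \<in> {t..T} \<Longrightarrow> X u \<in> borel_measurable M"
  unfolding adapted_on_def using is_filtration_measurable by blast

lemma cont_semimartingale_onD:
  assumes "cont_semimartingale_on M F t T S"
  shows "adapted_on F t T S" and "AE \<omega> in M. continuous_on {t..T} (\<lambda>u. S u \<omega>)"
  using assms unfolding cont_semimartingale_on_def continuous_paths_on_def by blast+

lemma stopping_time_measurable:
  "is_filtration M F \<Longrightarrow> stopping_time F \<tau> \<Longrightarrow> \<tau> \<in> borel_measurable M"
  unfolding is_filtration_def subalgebra_def by (intro measurable_stopping_time[of F]) auto

lemma quadratic_variation_sum_measurable:
  assumes "is_filtration M F" "adapted_on F t T X" "partition_seq t T p N"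
  shows "quadratic_variation_sum X p N n \<in> borel_measurable M"
  unfolding quadratic_variation_sum_def
proof (rule borel_measurable_sum)
  fix k assume "k \<in> {..<N n}"
  then have [measurable]: "X (p n k) \<in> borel_measurable M" "X (p n (Suc k)) \<in> borel_measurable M"
    using adapted_on_measurable[OF assms(1,2)] partition_seq_in[OF assms(3)] by auto
  show "(\<lambda>\<omega>. (X (p n (Suc k)) \<omega> - X (p n k) \<omega>)^2) \<in> borel_measurable M" by measurable
qed

context prob_space begin

lemma martingale_increment_orthogonal:
  fixes X :: "real \<Rightarrow> 'a \<Rightarrow> real" and h :: "real \<Rightarrow> real"
  assumes filt: "is_filtration M F" and mart: "martingale_on M F t T X"
    and "t \<le> s" "s \<le> u" "u \<le> T"
    and [measurable]: "h \<in> borel_measurable borel" and h_bounded: "\<And>x. \<bar>h x\<bar> \<le> B"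
  shows "integrable M (\<lambda>\<omega>. h (X s \<omega>) * (X u \<omega> - X s \<omega>))"
    and "(\<integral>\<omega>. h (X s \<omega>) * (X u \<omega> - X s \<omega>) \<partial>M) = 0"
proof -
  interpret sfs: sigma_finite_subalgebra M "F s"
    using filt prob_space_axioms finite_measure_subalgebra_is_sigma_finite
    unfolding is_filtration_def finite_measure_subalgebra_def finite_measure_subalgebra_axioms_def
      prob_space_def by blast
  have [measurable]: "X s \<in> borel_measurable (F s)"
    using mart \<open>t \<le> s\<close> \<open>s \<le> u\<close> \<open>u \<le> T\<close> unfolding martingale_on_def adapted_on_def by auto
  have [measurable]: "X s \<in> borel_measurable M" "X u \<in> borel_measurable M"
    using mart \<open>t \<le> s\<close> \<open>s \<le> u\<close> \<open>u \<le> T\<close> filt adapted_on_measurable unfolding martingale_on_def by auto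
  have int: "integrable M (X s)" "integrable M (X u)"
    using mart \<open>t \<le> s\<close> \<open>s \<le> u\<close> \<open>u \<le> T\<close> unfolding martingale_on_def by auto
  have "0 \<le> B" using h_bounded[of 0] by linarith
  have int_h: "integrable M (\<lambda>\<omega>. h (X s \<omega>) * X v \<omega>)" if "integrable M (X v)" for v
  proof (rule Bochner_Integration.integrable_bound[where f="\<lambda>\<omega>. B * X v \<omega>"])
    have [measurable]: "X v \<in> borel_measurable M" using that by auto
    show "(\<lambda>\<omega>. h (X s \<omega>) * X v \<omega>) \<in> borel_measurable M" by measurable
    show "AE \<omega> in M. norm (h (X s \<omega>) * X v \<omega>) \<le> norm (B * X v \<omega>)"
      using h_bounded \<open>0 \<le> B\<close> by (intro AE_I2) (simp add: abs_mult mult_right_mono)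
  qed (use that in simp)
  have "(\<integral>\<omega>. h (X s \<omega>) * X u \<omega> \<partial>M) = (\<integral>\<omega>. h (X s \<omega>) * real_cond_exp M (F s) (X u) \<omega> \<partial>M)"
    using sfs.real_cond_exp_intg(2)[OF int_h[OF int(2)]] by simp
  also have "\<dots> = (\<integral>\<omega>. h (X s \<omega>) * X s \<omega> \<partial>M)"
  proof (rule integral_cong_AE)
    show "AE \<omega> in M. h (X s \<omega>) * real_cond_exp M (F s) (X u) \<omega> = h (X s \<omega>) * X s \<omega>"
    proof -
      have "AE \<omega> in M. real_cond_exp M (F s) (X u) \<omega> = X s \<omega>"
        using mart \<open>t \<le> s\<close> \<open>s \<le> u\<close> \<open>u \<le> T\<close> unfolding martingale_on_def by auto
      then show ?thesis by eventually_elim simp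
    qed
  qed measurable
  finally have "(\<integral>\<omega>. h (X s \<omega>) * X u \<omega> \<partial>M) = (\<integral>\<omega>. h (X s \<omega>) * X s \<omega> \<partial>M)" .
  with int_h[OF int(1)] int_h[OF int(2)]
  show "integrable M (\<lambda>\<omega>. h (X s \<omega>) * (X u \<omega> - X s \<omega>))"
    and "(\<integral>\<omega>. h (X s \<omega>) * (X u \<omega> - X s \<omega>) \<partial>M) = 0"
    by (simp_all add: right_diff_distrib)
qed

lemma integral_huber_remainder_sum:
  assumes filt: "is_filtration M F" and mart: "martingale_on M F t T X"
    and P: "partition_seq t T p N" and "0 \<le> c"
  shows "integrable M (huber_remainder_sum c X p N n)"
    and "(\<integral>\<omega>. huber_remainder_sum c X p N n \<omega> \<partial>M) \<le> 2 * c * (\<integral>\<omega>. \<bar>X T \<omega>\<bar> \<partial>M)"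
proof -
  have X: "X (p n k) \<in> borel_measurable M" "integrable M (X (p n k))" if "k \<le> N n" for k
    using partition_seq_in[OF P that] mart adapted_on_measurable[OF filt]
    unfolding martingale_on_def by auto
  have int_huber: "integrable M (\<lambda>\<omega>. huber c (X (p n k) \<omega>))" if "k \<le> N n" for k
  proof (rule Bochner_Integration.integrable_bound[where f="\<lambda>\<omega>. 2 * c * X (p n k) \<omega>"])
    have [measurable]: "X (p n k) \<in> borel_measurable M" using X[OF that] by simp
    show "(\<lambda>\<omega>. huber c (X (p n k) \<omega>)) \<in> borel_measurable M" by measurable
    show "AE \<omega> in M. norm (huber c (X (p n k) \<omega>)) \<le> norm (2 * c * X (p n k) \<omega>)"
      using huber_le[OF \<open>0 \<le> c\<close>] huber_nonneg[OF \<open>0 \<le> c\<close>] \<open>0 \<le> c\<close>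
      by (intro AE_I2) (simp add: abs_mult)
  qed (use X[OF that] in simp)
  have hd: "huber_deriv c \<in> borel_measurable borel"
    using huber_deriv_measurable[of "\<lambda>x. x" borel c] by simp
  have orth: "integrable M (\<lambda>\<omega>. huber_deriv c (X (p n k) \<omega>) * (X (p n (Suc k)) \<omega> - X (p n k) \<omega>))"
    "(\<integral>\<omega>. huber_deriv c (X (p n k) \<omega>) * (X (p n (Suc k)) \<omega> - X (p n k) \<omega>) \<partial>M) = 0"
    if "k < N n" for k
  proof -
    have "t \<le> p n k" "p n k \<le> p n (Suc k)" "p n (Suc k) \<le> T"
      using partition_seq_in[OF P, of k n] partition_seq_in[OF P, of "Suc k" n]
        partition_seq_mono[OF P, of k "Suc k" n] that by auto
    then show "integrable M (\<lambda>\<omega>. huber_deriv c (X (p n k) \<omega>) * (X (p n (Suc k)) \<omega> - X (p n k) \<omega>))"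
      "(\<integral>\<omega>. huber_deriv c (X (p n k) \<omega>) * (X (p n (Suc k)) \<omega> - X (p n k) \<omega>) \<partial>M) = 0"
      using martingale_increment_orthogonal[OF filt mart _ _ _ hd abs_huber_deriv_le[OF \<open>0 \<le> c\<close>]]
      by auto
  qed
  show "integrable M (huber_remainder_sum c X p N n)"
    unfolding huber_remainder_sum_def by (intro Bochner_Integration.integrable_sum Bochner_Integration.integrable_diff int_huber orth) auto
  have "(\<integral>\<omega>. huber_remainder_sum c X p N n \<omega> \<partial>M)
      = (\<Sum>k<N n. (\<integral>\<omega>. huber c (X (p n (Suc k)) \<omega>) \<partial>M) - (\<integral>\<omega>. huber c (X (p n k) \<omega>) \<partial>M))"
    unfolding huber_remainder_sum_def
    by (subst Bochner_Integration.integral_sum)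
       (auto intro!: sum.cong Bochner_Integration.integrable_diff int_huber orth
         simp: Bochner_Integration.integral_diff[OF Bochner_Integration.integrable_diff]
           Bochner_Integration.integral_diff int_huber orth)
  also have "\<dots> = (\<integral>\<omega>. huber c (X T \<omega>) \<partial>M) - (\<integral>\<omega>. huber c (X t \<omega>) \<partial>M)"
    using P unfolding partition_seq_def by (subst sum_lessThan_telescope) simp
  also have "\<dots> \<le> (\<integral>\<omega>. 2 * c * \<bar>X T \<omega>\<bar> \<partial>M)"
  proof -
    have "p n (N n) = T" using P unfolding partition_seq_def by auto
    then have "integrable M (\<lambda>\<omega>. huber c (X T \<omega>))" "integrable M (X T)"
      using int_huber[of "N n"] X[of "N n"] by auto
    then have "(\<integral>\<omega>. huber c (X T \<omega>) \<partial>M) \<le> (\<integral>\<omega>. 2 * c * \<bar>X T \<omega>\<bar> \<partial>M)"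
      using huber_le[OF \<open>0 \<le> c\<close>] by (intro integral_mono) auto
    moreover have "0 \<le> (\<integral>\<omega>. huber c (X t \<omega>) \<partial>M)"
      using huber_nonneg[OF \<open>0 \<le> c\<close>] by (simp add: integral_nonneg_AE)
    ultimately show ?thesis by linarith
  qed
  finally show "(\<integral>\<omega>. huber_remainder_sum c X p N n \<omega> \<partial>M) \<le> 2 * c * (\<integral>\<omega>. \<bar>X T \<omega>\<bar> \<partial>M)"
    by simp
qed

lemma martingale_quadratic_variation_bounded_in_prob:
  fixes X :: "real \<Rightarrow> 'a \<Rightarrow> real"
  assumes filt: "is_filtration M F" and mart: "martingale_on M F t T X"
    and P: "partition_seq t T p N"
    and bounded: "AE \<omega> in M. \<exists>B. \<forall>u\<in>{t..T}. \<bar>X u \<omega>\<bar> \<le> B"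
  shows "bounded_in_prob M (quadratic_variation_sum X p N)"
proof -
  have adapted: "adapted_on F t T X" using mart unfolding martingale_on_def by blast
  have X [measurable]: "X (p n k) \<in> borel_measurable M" if "k \<le> N n" for n k
    using adapted_on_measurable[OF filt adapted partition_seq_in[OF P that]] .
  define G where "G c = (\<Union>n. \<Union>k\<in>{..N n}. {\<omega>\<in>space M. real c < \<bar>X (p n k) \<omega>\<bar>})" for c :: nat
  have G_events: "G c \<in> events" for c
    unfolding G_def by (intro sets.countable_UN' sets.finite_UN) (auto intro: X)
  \<comment> \<open>Off G c the path stays in [-c, c], where the Huber function is the square.\<close>
  show ?thesis
  proof (rule bounded_in_prob_localize[where G=G and Z'="\<lambda>c. huber_remainder_sum (real c) X p N"])
    show "(\<lambda>c. prob (G c)) \<longlonglongrightarrow> 0"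
    proof (rule prob_tendsto_0_if_AE_eventually_notin[OF G_events])
      show "AE \<omega> in M. eventually (\<lambda>c. \<omega> \<notin> G c) sequentially"
        using bounded
      proof eventually_elim
        case (elim \<omega>)
        then obtain B where B: "\<And>u. u \<in> {t..T} \<Longrightarrow> \<bar>X u \<omega>\<bar> \<le> B" by blast
        obtain c0 :: nat where "B \<le> real c0" using real_arch_simple by blast
        then have "\<bar>X (p n k) \<omega>\<bar> \<le> real c" if "c0 \<le> c" "k \<le> N n" for c n k
          using B[OF partition_seq_in[OF P that(2)]] that(1) by (meson order_trans of_nat_le_iff)
        then show ?case
          unfolding eventually_sequentially G_def by (intro exI[of _ c0]) (auto simp: not_less)
      qed
    qed
    show "bounded_in_prob M (huber_remainder_sum (real c) X p N)" for c
      using integral_huber_remainder_sum[OF filt mart P, of "real c"]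
      by (intro bounded_in_prob_if_integral_le huber_remainder_sum_nonneg) auto
    show "huber_remainder_sum (real c) X p N n \<in> borel_measurable M" for c n
      using integral_huber_remainder_sum(1)[OF filt mart P, of "real c"] by auto
    show "\<bar>quadratic_variation_sum X p N n \<omega>\<bar> \<le> \<bar>huber_remainder_sum (real c) X p N n \<omega>\<bar>"
      if "\<omega> \<in> space M - G c" for c n \<omega>
      using that quadratic_variation_sum_nonneg
      by (subst quadratic_variation_sum_eq_huber_remainder_sum[of N n X p \<omega> "real c"])
         (auto simp: G_def not_less)
  qed (use quadratic_variation_sum_measurable[OF filt adapted P] G_events in auto)
qed

lemma local_martingale_quadratic_variation_bounded_in_prob:
  fixes X :: "real \<Rightarrow> 'a \<Rightarrow> real"
  assumes filt: "is_filtration M F" and lmart: "cont_local_martingale_on M F t T X"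
    and P: "partition_seq t T p N"
  shows "bounded_in_prob M (quadratic_variation_sum X p N)"
proof -
  obtain \<tau> :: "nat \<Rightarrow> 'a \<Rightarrow> real" where st: "\<And>m. stopping_time F (\<tau> m)"
    and reach: "AE \<omega> in M. (\<forall>m. \<tau> m \<omega> \<le> \<tau> (Suc m) \<omega>) \<and> (\<exists>m. T \<le> \<tau> m \<omega>)"
    and stopped: "\<And>m. martingale_on M F t T (\<lambda>u \<omega>. X (max t (min u (\<tau> m \<omega>))) \<omega>)"
    and adapted: "adapted_on F t T X" and cont: "continuous_paths_on M t T X"
    using lmart unfolding cont_local_martingale_on_def by blast
  define G where "G m = {\<omega>\<in>space M. \<tau> m \<omega> < T}" for m
  have G_events: "G m \<in> events" for m
    using stopping_time_measurable[OF filt st] unfolding G_def by measurable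
  show ?thesis
  proof (rule bounded_in_prob_localize[where G=G and
        Z'="\<lambda>m. quadratic_variation_sum (\<lambda>u \<omega>. X (max t (min u (\<tau> m \<omega>))) \<omega>) p N"])
    show "(\<lambda>m. prob (G m)) \<longlonglongrightarrow> 0"
    proof (rule prob_tendsto_0_if_AE_eventually_notin[OF G_events])
      show "AE \<omega> in M. eventually (\<lambda>m. \<omega> \<notin> G m) sequentially"
        using reach
      proof eventually_elim
        case (elim \<omega>)
        then obtain m0 where "T \<le> \<tau> m0 \<omega>" by blast
        moreover have "\<tau> m0 \<omega> \<le> \<tau> m \<omega>" if "m0 \<le> m" for m
          using lift_Suc_mono_le[of "\<lambda>m. \<tau> m \<omega>"] elim that by blast
        ultimately have "T \<le> \<tau> m \<omega>" if "m0 \<le> m" for m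
          using that by (meson order_trans)
        then show ?case
          unfolding eventually_sequentially G_def by (intro exI[of _ m0]) (auto simp: not_less)
      qed
    qed
    show "bounded_in_prob M (quadratic_variation_sum (\<lambda>u \<omega>. X (max t (min u (\<tau> m \<omega>))) \<omega>) p N)" for m
    proof (rule martingale_quadratic_variation_bounded_in_prob[OF filt stopped P])
      show "AE \<omega> in M. \<exists>B. \<forall>u\<in>{t..T}. \<bar>X (max t (min u (\<tau> m \<omega>))) \<omega>\<bar> \<le> B"
        using cont unfolding continuous_paths_on_def
      proof eventually_elim
        case (elim \<omega>)
        then obtain B where "\<And>u. u \<in> {t..T} \<Longrightarrow> \<bar>X u \<omega>\<bar> \<le> B"
          using bounded_on_Icc_if_continuous by blast
        then show ?case by (intro exI[of _ B]) auto
      qed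
    qed
    show "quadratic_variation_sum (\<lambda>u \<omega>. X (max t (min u (\<tau> m \<omega>))) \<omega>) p N n \<in> borel_measurable M" for m n
      using stopped[of m] unfolding martingale_on_def by (intro quadratic_variation_sum_measurable[OF filt _ P]) blast
    show "\<bar>quadratic_variation_sum X p N n \<omega>\<bar>
        \<le> \<bar>quadratic_variation_sum (\<lambda>u \<omega>. X (max t (min u (\<tau> m \<omega>))) \<omega>) p N n \<omega>\<bar>"
      if "\<omega> \<in> space M - G m" for m n \<omega>
    proof -
      have "T \<le> \<tau> m \<omega>" using that unfolding G_def by auto
      then have "X (max t (min (p n k) (\<tau> m \<omega>))) \<omega> = X (p n k) \<omega>" if "k \<le> N n" for k
        using partition_seq_in[OF P that] by (simp add: min_absorb1 max_absorb2)
      then have "quadratic_variation_sum (\<lambda>u \<omega>. X (max t (min u (\<tau> m \<omega>))) \<omega>) p N n \<omega>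
          = quadratic_variation_sum X p N n \<omega>"
        unfolding quadratic_variation_sum_def by (intro sum.cong refl) auto
      then show ?thesis by simp
    qed
  qed (use quadratic_variation_sum_measurable[OF filt adapted P] G_events in auto)
qed

lemma bounded_variation_quadratic_variation_bounded_in_prob:
  fixes A :: "real \<Rightarrow> 'a \<Rightarrow> real"
  assumes filt: "is_filtration M F" and adapted: "adapted_on F t T A" and P: "partition_seq t T p N"
    and bv: "AE \<omega> in M. bounded_variation_on t T (\<lambda>u. A u \<omega>)"
  shows "bounded_in_prob M (quadratic_variation_sum A p N)"
proof (rule bounded_in_prob_if_AE_bounded)
  show "AE \<omega> in M. \<exists>B. \<forall>n. \<bar>quadratic_variation_sum A p N n \<omega>\<bar> \<le> B"
    using bv
  proof eventually_elim
    case (elim \<omega>)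
    then obtain B where B: "\<And>n q. q 0 = t \<Longrightarrow> q n = T \<Longrightarrow> (\<forall>k<n. q k \<le> q (Suc k)) \<Longrightarrow>
        (\<Sum>k<n. \<bar>A (q (Suc k)) \<omega> - A (q k) \<omega>\<bar>) \<le> B"
      unfolding bounded_variation_on_def by blast
    have "quadratic_variation_sum A p N n \<omega> \<le> B^2" for n
    proof -
      have "(\<Sum>k<N n. \<bar>A (p n (Suc k)) \<omega> - A (p n k) \<omega>\<bar>) \<le> B"
        using P unfolding partition_seq_def by (intro B) (auto intro: less_imp_le)
      then have "(\<Sum>k<N n. \<bar>A (p n (Suc k)) \<omega> - A (p n k) \<omega>\<bar>)^2 \<le> B^2"
        by (intro power_mono) (auto intro: sum_nonneg)
      then show ?thesis
        using sum_power2_le_power2_sum_abs[of "\<lambda>k. A (p n (Suc k)) \<omega> - A (p n k) \<omega>" "N n"]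
        unfolding quadratic_variation_sum_def by linarith
    qed
    then show ?case by (intro exI[of _ "B^2"]) (simp add: abs_of_nonneg[OF quadratic_variation_sum_nonneg])
  qed
qed (rule quadratic_variation_sum_measurable[OF filt adapted P])

lemma semimartingale_quadratic_variation_bounded_in_prob:
  fixes S :: "real \<Rightarrow> 'a \<Rightarrow> real"
  assumes filt: "is_filtration M F" and smart: "cont_semimartingale_on M F t T S"
    and P: "partition_seq t T p N"
  shows "bounded_in_prob M (quadratic_variation_sum S p N)"
proof -
  obtain X A where lmart: "cont_local_martingale_on M F t T X" and adapted_A: "adapted_on F t T A"
    and bv: "AE \<omega> in M. bounded_variation_on t T (\<lambda>u. A u \<omega>)"
    and decomp: "AE \<omega> in M. X t \<omega> = 0 \<and> A t \<omega> = 0 \<and> (\<forall>u\<in>{t..T}. S u \<omega> = S t \<omega> + X u \<omega> + A u \<omega>)"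
    using smart unfolding cont_semimartingale_on_def by blast
  have adapted_S: "adapted_on F t T S" and adapted_X: "adapted_on F t T X"
    using smart lmart unfolding cont_semimartingale_on_def cont_local_martingale_on_def by blast+
  have [measurable]: "quadratic_variation_sum S p N n \<in> borel_measurable M"
    "quadratic_variation_sum X p N n \<in> borel_measurable M"
    "quadratic_variation_sum A p N n \<in> borel_measurable M" for n
    by (intro quadratic_variation_sum_measurable[OF filt _ P] adapted_S adapted_X adapted_A)+
  have le: "AE \<omega> in M. \<bar>quadratic_variation_sum S p N n \<omega>\<bar>
      \<le> \<bar>2 * quadratic_variation_sum X p N n \<omega>\<bar> + \<bar>2 * quadratic_variation_sum A p N n \<omega>\<bar>" for n
    using decomp
  proof eventually_elim
    case (elim \<omega>)
    have "quadratic_variation_sum S p N n \<omega>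
        \<le> 2 * quadratic_variation_sum X p N n \<omega> + 2 * quadratic_variation_sum A p N n \<omega>"
    proof (rule quadratic_variation_sum_add_le)
      fix k assume "k \<le> N n"
      then show "S (p n k) \<omega> = S t \<omega> + X (p n k) \<omega> + A (p n k) \<omega>"
        using elim partition_seq_in[OF P] by blast
    qed
    then show ?case by (simp add: quadratic_variation_sum_nonneg)
  qed
  have bounded_X: "bounded_in_prob M (quadratic_variation_sum X p N)"
    by (rule local_martingale_quadratic_variation_bounded_in_prob[OF filt lmart P])
  have bounded_A: "bounded_in_prob M (quadratic_variation_sum A p N)"
    by (rule bounded_variation_quadratic_variation_bounded_in_prob[OF filt adapted_A P bv])
  show ?thesis
    by (rule bounded_in_prob_add[OF _ _ _ bounded_in_prob_cmult[OF _ bounded_X]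
          bounded_in_prob_cmult[OF _ bounded_A] le]) measurable
qed

end

section \<open>The second-order remainder of the logarithm\<close>

definition ln_remainder :: "real \<Rightarrow> real" where
  "ln_remainder r = ln (1 + r) - r + r^2 / 2"

lemma ln_remainder_measurable [measurable]: "ln_remainder \<in> borel_measurable borel"
  unfolding ln_remainder_def by measurable

lemma abs_ln_remainder_le:
  assumes r: "\<bar>r\<bar> \<le> 1/2"
  shows "\<bar>ln_remainder r\<bar> \<le> 2 * \<bar>r\<bar>^3"
proof -
  let ?S = "{-\<bar>r\<bar>..\<bar>r\<bar>}"
  have "norm (ln_remainder r - ln_remainder 0) \<le> 2 * r^2 * norm (r - 0)"
  proof (rule field_differentiable_bound[where f' = "\<lambda>s. s^2 / (1 + s)"])
    fix z assume "z \<in> ?S"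
    then have z: "\<bar>z\<bar> \<le> \<bar>r\<bar>" "1/2 \<le> 1 + z" using r by auto
    have "((\<lambda>s. ln (1 + s) - s + s^2 / 2) has_real_derivative 1 / (1 + z) - 1 + z) (at z)"
      using z by (auto intro!: derivative_eq_intros)
    moreover have "1 / (1 + z) - 1 + z = z^2 / (1 + z)"
      using z by (simp add: field_simps power2_eq_square)
    ultimately show "(ln_remainder has_field_derivative z^2 / (1 + z)) (at z within ?S)"
      unfolding ln_remainder_def[abs_def] by (simp add: has_field_derivative_at_within)
    have "z^2 / (1 + z) \<le> r^2 / (1/2)"
      using z by (intro frac_le) (auto simp: abs_le_square_iff)
    then show "norm (z^2 / (1 + z)) \<le> 2 * r^2" using z by simp
  qed auto
  then show ?thesis by (simp add: ln_remainder_def power3_eq_cube power2_eq_square abs_mult)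
qed

definition ln_remainder_sum ::
    "(real \<Rightarrow> 'a \<Rightarrow> real) \<Rightarrow> (real \<Rightarrow> 'a \<Rightarrow> real) \<Rightarrow> (nat \<Rightarrow> nat \<Rightarrow> real) \<Rightarrow> (nat \<Rightarrow> nat) \<Rightarrow> nat \<Rightarrow> 'a \<Rightarrow> real" where
  "ln_remainder_sum Y S p N n \<omega> =
    (\<Sum>k<N n. Y (p n k) \<omega> * ln_remainder ((S (p n (Suc k)) \<omega> - S (p n k) \<omega>) / S (p n k) \<omega>))"

lemma ln_remainder_sum_measurable:
  assumes "\<And>k. k \<le> N n \<Longrightarrow> Y (p n k) \<in> borel_measurable M" "\<And>k. k \<le> N n \<Longrightarrow> S (p n k) \<in> borel_measurable M"
  shows "ln_remainder_sum Y S p N n \<in> borel_measurable M"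
  unfolding ln_remainder_sum_def[abs_def]
proof (rule borel_measurable_sum)
  fix k assume "k \<in> {..<N n}"
  then have [measurable]: "Y (p n k) \<in> borel_measurable M" "S (p n k) \<in> borel_measurable M"
    "S (p n (Suc k)) \<in> borel_measurable M"
    using assms by auto
  show "(\<lambda>\<omega>. Y (p n k) \<omega> * ln_remainder ((S (p n (Suc k)) \<omega> - S (p n k) \<omega>) / S (p n k) \<omega>)) \<in> borel_measurable M"
    by measurable
qed

lemma abs_ln_remainder_sum_le:
  fixes y s :: "nat \<Rightarrow> real"
  assumes r: "\<And>k. k < n \<Longrightarrow> \<bar>(s (Suc k) - s k) / s k\<bar> \<le> w" and "w \<le> 1/2"
    and y: "\<And>k. k < n \<Longrightarrow> \<bar>y k / (s k)^2\<bar> \<le> v"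
  shows "\<bar>\<Sum>k<n. y k * ln_remainder ((s (Suc k) - s k) / s k)\<bar> \<le> 2 * w * v * (\<Sum>k<n. (s (Suc k) - s k)^2)"
proof -
  have "\<bar>y k * ln_remainder ((s (Suc k) - s k) / s k)\<bar> \<le> 2 * w * v * (s (Suc k) - s k)^2" if "k < n" for k
  proof -
    let ?r = "(s (Suc k) - s k) / s k"
    have "0 \<le> w" using r[OF that] by linarith
    have "\<bar>?r\<bar> \<le> 1/2" using r[OF that] \<open>w \<le> 1/2\<close> by linarith
    then have "\<bar>ln_remainder ?r\<bar> \<le> 2 * \<bar>?r\<bar>^3" by (rule abs_ln_remainder_le)
    also have "\<dots> = 2 * \<bar>?r\<bar> * ?r^2"
      by (simp only: power3_eq_cube power2_eq_square abs_mult_self_eq mult.assoc)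
    also have "\<dots> \<le> 2 * w * ?r^2"
      using r[OF that] by (intro mult_right_mono) auto
    finally have "\<bar>y k * ln_remainder ?r\<bar> \<le> \<bar>y k\<bar> * (2 * w * ?r^2)"
      unfolding abs_mult by (rule mult_left_mono) simp
    also have "\<dots> = 2 * w * (\<bar>y k / (s k)^2\<bar> * (s (Suc k) - s k)^2)"
      by (simp add: power_divide abs_divide mult_ac)
    also have "\<dots> \<le> 2 * w * (v * (s (Suc k) - s k)^2)"
      using y[OF that] \<open>0 \<le> w\<close> by (intro mult_left_mono mult_right_mono) auto
    finally show ?thesis by (simp add: mult_ac)
  qed
  then have "\<bar>\<Sum>k<n. y k * ln_remainder ((s (Suc k) - s k) / s k)\<bar> \<le> (\<Sum>k<n. 2 * w * v * (s (Suc k) - s k)^2)"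
    by (intro order_trans[OF sum_abs sum_mono]) auto
  then show ?thesis by (simp add: sum_distrib_left)
qed

context prob_space begin

lemma partition_max_bounded_in_prob:
  fixes H :: "real \<Rightarrow> 'a \<Rightarrow> real"
  assumes P: "partition_seq t T p N" and "t < T"
    and meas: "\<And>n k. k \<le> N n \<Longrightarrow> H (p n k) \<in> borel_measurable M"
    and cont: "AE \<omega> in M. continuous_on {t..T} (\<lambda>u. H u \<omega>)"
  shows "bounded_in_prob M (\<lambda>n \<omega>. Max ((\<lambda>k. \<bar>H (p n k) \<omega>\<bar>) ` {..<N n}))"
proof (rule bounded_in_prob_if_AE_bounded)
  show "(\<lambda>\<omega>. Max ((\<lambda>k. \<bar>H (p n k) \<omega>\<bar>) ` {..<N n})) \<in> borel_measurable M" for n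
    using meas by (intro borel_measurable_Max borel_measurable_abs) auto
  show "AE \<omega> in M. \<exists>B. \<forall>n. \<bar>Max ((\<lambda>k. \<bar>H (p n k) \<omega>\<bar>) ` {..<N n})\<bar> \<le> B"
    using cont
  proof eventually_elim
    case (elim \<omega>)
    then obtain B where B: "0 \<le> B" "\<And>u. u \<in> {t..T} \<Longrightarrow> \<bar>H u \<omega>\<bar> \<le> B"
      using bounded_on_Icc_if_continuous by blast
    have nonempty: "0 \<in> {..<N n}" for n using partition_seq_length_pos[OF P \<open>t < T\<close>] by simp
    have "Max ((\<lambda>k. \<bar>H (p n k) \<omega>\<bar>) ` {..<N n}) \<le> B" for n
      using nonempty[of n] B(2) partition_seq_in[OF P, of _ n] by (subst Max_le_iff) auto
    moreover have "0 \<le> Max ((\<lambda>k. \<bar>H (p n k) \<omega>\<bar>) ` {..<N n})" for n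
      using nonempty by (intro order_trans[OF _ Max_ge[OF _ imageI]]) simp_all
    ultimately show ?case by (intro exI[of _ B]) simp
  qed
qed

lemma max_relative_increment_conv_in_prob_0:
  fixes S :: "real \<Rightarrow> 'a \<Rightarrow> real"
  assumes P: "partition_seq t T p N" and "t < T"
    and meas: "\<And>n k. k \<le> N n \<Longrightarrow> S (p n k) \<in> borel_measurable M"
    and paths: "AE \<omega> in M. (\<forall>u\<in>{t..T}. 0 < S u \<omega>) \<and> continuous_on {t..T} (\<lambda>u. S u \<omega>)"
  shows "conv_in_prob M (\<lambda>n \<omega>. Max ((\<lambda>k. \<bar>(S (p n (Suc k)) \<omega> - S (p n k) \<omega>) / S (p n k) \<omega>\<bar>) ` {..<N n}))
    (\<lambda>_. 0)"
proof (rule conv_in_prob_if_AE_tendsto)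
  show "(\<lambda>\<omega>. Max ((\<lambda>k. \<bar>(S (p n (Suc k)) \<omega> - S (p n k) \<omega>) / S (p n k) \<omega>\<bar>) ` {..<N n})) \<in> borel_measurable M"
    for n using meas by (intro borel_measurable_Max) auto
  have nonempty: "0 \<in> {..<N n}" for n using partition_seq_length_pos[OF P \<open>t < T\<close>] by simp
  show "AE \<omega> in M. (\<lambda>n. Max ((\<lambda>k. \<bar>(S (p n (Suc k)) \<omega> - S (p n k) \<omega>) / S (p n k) \<omega>\<bar>) ` {..<N n})) \<longlonglongrightarrow> 0"
    using paths
  proof eventually_elim
    case (elim \<omega>)
    then have "continuous_on {t..T} (\<lambda>u. 1 / S u \<omega>)" by (auto intro!: continuous_intros)
    then obtain B where B: "0 \<le> B" "\<And>u. u \<in> {t..T} \<Longrightarrow> \<bar>1 / S u \<omega>\<bar> \<le> B"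
      using bounded_on_Icc_if_continuous by blast
    define incr where "incr n = Max ((\<lambda>k. \<bar>S (p n (Suc k)) \<omega> - S (p n k) \<omega>\<bar>) ` {..<N n})" for n
    have "0 \<le> incr n" for n
      using nonempty unfolding incr_def by (intro order_trans[OF _ Max_ge[OF _ imageI]]) simp_all
    have "\<bar>(S (p n (Suc k)) \<omega> - S (p n k) \<omega>) / S (p n k) \<omega>\<bar> \<le> incr n * B" if "k < N n" for n k
    proof -
      have "\<bar>(S (p n (Suc k)) \<omega> - S (p n k) \<omega>) / S (p n k) \<omega>\<bar>
          = \<bar>S (p n (Suc k)) \<omega> - S (p n k) \<omega>\<bar> * \<bar>1 / S (p n k) \<omega>\<bar>"
        by (simp add: abs_divide)
      also have "\<dots> \<le> incr n * B"
      proof (rule mult_mono)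
        show "\<bar>S (p n (Suc k)) \<omega> - S (p n k) \<omega>\<bar> \<le> incr n"
          unfolding incr_def using that by (intro Max_ge) auto
        show "\<bar>1 / S (p n k) \<omega>\<bar> \<le> B"
          using partition_seq_in[OF P, of k n] that by (intro B(2)) simp
      qed (simp_all add: \<open>0 \<le> incr n\<close>)
      finally show ?thesis .
    qed
    then have le: "Max ((\<lambda>k. \<bar>(S (p n (Suc k)) \<omega> - S (p n k) \<omega>) / S (p n k) \<omega>\<bar>) ` {..<N n}) \<le> incr n * B" for n
      using nonempty[of n] by (subst Max_le_iff) auto
    have nonneg: "0 \<le> Max ((\<lambda>k. \<bar>(S (p n (Suc k)) \<omega> - S (p n k) \<omega>) / S (p n k) \<omega>\<bar>) ` {..<N n})" for n
      using nonempty by (intro order_trans[OF _ Max_ge[OF _ imageI]]) simp_all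
    have "continuous_on {t..T} (\<lambda>u. S u \<omega>)" using elim by blast
    then have "incr \<longlonglongrightarrow> 0"
      unfolding incr_def by (rule partition_seq_max_increment_tendsto_0[OF P \<open>t < T\<close>])
    then have lim: "(\<lambda>n. incr n * B) \<longlonglongrightarrow> 0"
      by (rule tendsto_mult_left_zero)
    show ?case
      by (rule tendsto_sandwich[OF _ _ tendsto_const lim]) (use le nonneg in simp_all)
  qed
qed simp

lemma ln_remainder_sum_conv_in_prob_0:
  fixes Sa Sb :: "real \<Rightarrow> 'a \<Rightarrow> real"
  assumes filt: "is_filtration M F" and P: "partition_seq t T p N" and "t < T"
    and smart_a: "cont_semimartingale_on M F t T Sa" and smart_b: "cont_semimartingale_on M F t T Sb"
    and pos: "AE \<omega> in M. \<forall>u\<in>{t..T}. 0 < Sa u \<omega> \<and> 0 < Sb u \<omega>"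
  shows "conv_in_prob M (ln_remainder_sum (\<lambda>u \<omega>. ln (Sa u \<omega>)) Sb p N) (\<lambda>_. 0)"
proof -
  note adapted_a = cont_semimartingale_onD(1)[OF smart_a]
    and adapted_b = cont_semimartingale_onD(1)[OF smart_b]
  note paths = pos cont_semimartingale_onD(2)[OF smart_a] cont_semimartingale_onD(2)[OF smart_b]
  have meas [measurable]: "Sa (p n k) \<in> borel_measurable M" "Sb (p n k) \<in> borel_measurable M" if "k \<le> N n" for n k
    using adapted_on_measurable[OF filt _ partition_seq_in[OF P that]] adapted_a adapted_b by auto
  define W where "W n \<omega> = Max ((\<lambda>k. \<bar>(Sb (p n (Suc k)) \<omega> - Sb (p n k) \<omega>) / Sb (p n k) \<omega>\<bar>) ` {..<N n})" for n \<omega>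
  define V where "V n \<omega> = Max ((\<lambda>k. \<bar>ln (Sa (p n k) \<omega>) / (Sb (p n k) \<omega>)^2\<bar>) ` {..<N n})" for n \<omega>
  from paths have "AE \<omega> in M. (\<forall>u\<in>{t..T}. 0 < Sb u \<omega>) \<and> continuous_on {t..T} (\<lambda>u. Sb u \<omega>)"
    by eventually_elim blast
  then have W: "conv_in_prob M W (\<lambda>_. 0)"
    unfolding W_def[abs_def] by (intro max_relative_increment_conv_in_prob_0[OF P \<open>t < T\<close>] meas)
  from paths have "AE \<omega> in M. continuous_on {t..T} (\<lambda>u. ln (Sa u \<omega>) / (Sb u \<omega>)^2)"
    by eventually_elim (auto intro!: continuous_intros)
  then have V: "bounded_in_prob M V"
    unfolding V_def[abs_def] by (intro partition_max_bounded_in_prob[OF P \<open>t < T\<close>]) (auto intro: meas)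
  have [measurable]: "W n \<in> borel_measurable M" "V n \<in> borel_measurable M" for n
    unfolding W_def[abs_def] V_def[abs_def] using meas by (intro borel_measurable_Max; simp)+
  have nonempty: "0 \<in> {..<N n}" for n using partition_seq_length_pos[OF P \<open>t < T\<close>] by simp
  have W_nonneg: "0 \<le> W n \<omega>" and V_nonneg: "0 \<le> V n \<omega>" for n \<omega>
    unfolding W_def V_def using nonempty[of n] by (intro order_trans[OF _ Max_ge[OF _ imageI]]; simp)+
  have Q: "bounded_in_prob M (quadratic_variation_sum Sb p N)"
    by (rule semimartingale_quadratic_variation_bounded_in_prob[OF filt smart_b P])
  have [measurable]: "quadratic_variation_sum Sb p N n \<in> borel_measurable M" for n
    by (rule quadratic_variation_sum_measurable[OF filt adapted_b P])
  have U: "bounded_in_prob M (\<lambda>n \<omega>. 2 * V n \<omega> * quadratic_variation_sum Sb p N n \<omega>)"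
    by (rule bounded_in_prob_mult[OF _ _ _ bounded_in_prob_cmult[OF _ V, of 2] Q]) (auto simp: abs_mult)
  show ?thesis
  proof (rule conv_in_prob_zero_if_le_mult[OF _ _ _ U W, of _ "1/2"])
    show "AE \<omega> in M. \<bar>W n \<omega>\<bar> \<le> 1/2 \<longrightarrow> \<bar>ln_remainder_sum (\<lambda>u \<omega>. ln (Sa u \<omega>)) Sb p N n \<omega>\<bar>
        \<le> \<bar>2 * V n \<omega> * quadratic_variation_sum Sb p N n \<omega>\<bar> * \<bar>W n \<omega>\<bar>" for n
    proof (intro AE_I2 impI)
      fix \<omega> assume "\<bar>W n \<omega>\<bar> \<le> 1/2"
      then have "\<bar>ln_remainder_sum (\<lambda>u \<omega>. ln (Sa u \<omega>)) Sb p N n \<omega>\<bar>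
          \<le> 2 * W n \<omega> * V n \<omega> * quadratic_variation_sum Sb p N n \<omega>"
        unfolding ln_remainder_sum_def quadratic_variation_sum_def
        by (intro abs_ln_remainder_sum_le) (auto simp: W_def V_def)
      then show "\<bar>ln_remainder_sum (\<lambda>u \<omega>. ln (Sa u \<omega>)) Sb p N n \<omega>\<bar>
          \<le> \<bar>2 * V n \<omega> * quadratic_variation_sum Sb p N n \<omega>\<bar> * \<bar>W n \<omega>\<bar>"
        using W_nonneg[of n \<omega>] V_nonneg[of n \<omega>] quadratic_variation_sum_nonneg[of Sb p N n \<omega>]
        by (simp add: abs_mult mult_ac)
    qed
  qed (use meas in \<open>auto intro: ln_remainder_sum_measurable\<close>)
qed

end

section \<open>Quadratic covariation of the logarithms\<close>

definition riemann_sum ::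
    "(real \<Rightarrow> 'a \<Rightarrow> real) \<Rightarrow> (real \<Rightarrow> 'a \<Rightarrow> real) \<Rightarrow> (nat \<Rightarrow> nat \<Rightarrow> real) \<Rightarrow> (nat \<Rightarrow> nat) \<Rightarrow> nat \<Rightarrow> 'a \<Rightarrow> real" where
  "riemann_sum H X p N n \<omega> = (\<Sum>k<N n. H (p n k) \<omega> * (X (p n (Suc k)) \<omega> - X (p n k) \<omega>))"

definition covariation_sum ::
    "(real \<Rightarrow> 'a \<Rightarrow> real) \<Rightarrow> (real \<Rightarrow> 'a \<Rightarrow> real) \<Rightarrow> (real \<Rightarrow> 'a \<Rightarrow> real) \<Rightarrow> (nat \<Rightarrow> nat \<Rightarrow> real) \<Rightarrow> (nat \<Rightarrow> nat)
      \<Rightarrow> nat \<Rightarrow> 'a \<Rightarrow> real" where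
  "covariation_sum H X Y p N n \<omega> =
    (\<Sum>k<N n. H (p n k) \<omega> * (X (p n (Suc k)) \<omega> - X (p n k) \<omega>) * (Y (p n (Suc k)) \<omega> - Y (p n k) \<omega>))"

lemma is_stoch_integralD:
  assumes "is_stoch_integral M t T H X I"
  shows "I \<in> borel_measurable M"
    and "partition_seq t T p N \<Longrightarrow> conv_in_prob M (riemann_sum H X p N) I"
  using assms unfolding is_stoch_integral_def riemann_sum_def[abs_def] by blast+

lemma is_qcov_integralD:
  assumes "is_qcov_integral M t T H X Y I"
  shows "I \<in> borel_measurable M"
    and "partition_seq t T p N \<Longrightarrow> conv_in_prob M (covariation_sum H X Y p N) I"
  using assms unfolding is_qcov_integral_def covariation_sum_def[abs_def] by blast+

lemma ln_increment_product_eq: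
  fixes a a' b b' :: real
  assumes "0 < a" "0 < a'" "0 < b" "0 < b'"
  shows "(ln a' - ln a) * (ln b' - ln b) = (ln a' * ln b' - ln a * ln b)
     - ln a / b * (b' - b) - ln b / a * (a' - a)
     + 1/2 * (ln a / b^2 * (b' - b) * (b' - b)) + 1/2 * (ln b / a^2 * (a' - a) * (a' - a))
     - ln a * ln_remainder ((b' - b) / b) - ln b * ln_remainder ((a' - a) / a)"
proof -
  define u v where "u = (b' - b) / b" and "v = (a' - a) / a"
  have ln_b': "ln b' = ln b + u - u^2 / 2 + ln_remainder u"
    and ln_a': "ln a' = ln a + v - v^2 / 2 + ln_remainder v"
  proof -
    have "1 + u = b' / b" "1 + v = a' / a" using assms by (simp_all add: u_def v_def field_simps)
    then show "ln b' = ln b + u - u^2 / 2 + ln_remainder u" "ln a' = ln a + v - v^2 / 2 + ln_remainder v"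
      unfolding ln_remainder_def using assms by (simp_all add: ln_div)
  qed
  have "ln a / b * (b' - b) = ln a * u" "ln b / a * (a' - a) = ln b * v"
    "ln a / b^2 * (b' - b) * (b' - b) = ln a * u^2" "ln b / a^2 * (a' - a) * (a' - a) = ln b * v^2"
    by (simp_all add: u_def v_def power2_eq_square)
  then show ?thesis
    unfolding u_def[symmetric] v_def[symmetric] ln_a' ln_b' by algebra
qed

lemma covariation_sum_ln_eq:
  fixes Si Sj :: "real \<Rightarrow> 'a \<Rightarrow> real"
  assumes "\<And>k. k \<le> N n \<Longrightarrow> 0 < Si (p n k) \<omega> \<and> 0 < Sj (p n k) \<omega>"
  shows "covariation_sum (\<lambda>u \<omega>. 1) (\<lambda>u \<omega>. ln (Si u \<omega>)) (\<lambda>u \<omega>. ln (Sj u \<omega>)) p N n \<omega>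
    = ln (Si (p n (N n)) \<omega>) * ln (Sj (p n (N n)) \<omega>) - ln (Si (p n 0) \<omega>) * ln (Sj (p n 0) \<omega>)
      - riemann_sum (\<lambda>u \<omega>. ln (Si u \<omega>) / Sj u \<omega>) Sj p N n \<omega>
      - riemann_sum (\<lambda>u \<omega>. ln (Sj u \<omega>) / Si u \<omega>) Si p N n \<omega>
      + 1/2 * covariation_sum (\<lambda>u \<omega>. ln (Si u \<omega>) / (Sj u \<omega>)^2) Sj Sj p N n \<omega>
      + 1/2 * covariation_sum (\<lambda>u \<omega>. ln (Sj u \<omega>) / (Si u \<omega>)^2) Si Si p N n \<omega>
      - ln_remainder_sum (\<lambda>u \<omega>. ln (Si u \<omega>)) Sj p N n \<omega>
      - ln_remainder_sum (\<lambda>u \<omega>. ln (Sj u \<omega>)) Si p N n \<omega>"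
proof -
  let ?a = "\<lambda>k. Si (p n k) \<omega>" and ?b = "\<lambda>k. Sj (p n k) \<omega>"
  have telescope: "(\<Sum>k<N n. ln (?a (Suc k)) * ln (?b (Suc k))) - (\<Sum>k<N n. ln (?a k) * ln (?b k))
      = ln (?a (N n)) * ln (?b (N n)) - ln (?a 0) * ln (?b 0)"
    using sum_lessThan_telescope[of "\<lambda>k. ln (?a k) * ln (?b k)" "N n"] by (simp only: sum_subtractf)
  have "covariation_sum (\<lambda>u \<omega>. 1) (\<lambda>u \<omega>. ln (Si u \<omega>)) (\<lambda>u \<omega>. ln (Sj u \<omega>)) p N n \<omega>
      = (\<Sum>k<N n. (ln (?a (Suc k)) - ln (?a k)) * (ln (?b (Suc k)) - ln (?b k)))"
    unfolding covariation_sum_def by simp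
  also have "\<dots> = (\<Sum>k<N n. (ln (?a (Suc k)) * ln (?b (Suc k)) - ln (?a k) * ln (?b k))
      - ln (?a k) / ?b k * (?b (Suc k) - ?b k) - ln (?b k) / ?a k * (?a (Suc k) - ?a k)
      + 1/2 * (ln (?a k) / (?b k)^2 * (?b (Suc k) - ?b k) * (?b (Suc k) - ?b k))
      + 1/2 * (ln (?b k) / (?a k)^2 * (?a (Suc k) - ?a k) * (?a (Suc k) - ?a k))
      - ln (?a k) * ln_remainder ((?b (Suc k) - ?b k) / ?b k)
      - ln (?b k) * ln_remainder ((?a (Suc k) - ?a k) / ?a k))"
    using assms by (intro sum.cong refl ln_increment_product_eq) auto
  also have "\<dots> = ln (?a (N n)) * ln (?b (N n)) - ln (?a 0) * ln (?b 0)
      - riemann_sum (\<lambda>u \<omega>. ln (Si u \<omega>) / Sj u \<omega>) Sj p N n \<omega>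
      - riemann_sum (\<lambda>u \<omega>. ln (Sj u \<omega>) / Si u \<omega>) Si p N n \<omega>
      + 1/2 * covariation_sum (\<lambda>u \<omega>. ln (Si u \<omega>) / (Sj u \<omega>)^2) Sj Sj p N n \<omega>
      + 1/2 * covariation_sum (\<lambda>u \<omega>. ln (Sj u \<omega>) / (Si u \<omega>)^2) Si Si p N n \<omega>
      - ln_remainder_sum (\<lambda>u \<omega>. ln (Si u \<omega>)) Sj p N n \<omega>
      - ln_remainder_sum (\<lambda>u \<omega>. ln (Sj u \<omega>)) Si p N n \<omega>"
    unfolding riemann_sum_def covariation_sum_def ln_remainder_sum_def
    by (simp only: sum.distrib sum_subtractf sum_distrib_left telescope)
  finally show ?thesis .
qed

context prob_space begin

lemma quadratic_covariation_ln_eq: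
  fixes Si Sj :: "real \<Rightarrow> 'a \<Rightarrow> real" and QC I1 I2 I3 I4 :: "'a \<Rightarrow> real"
  assumes filt: "is_filtration M F" and "t < T"
    and smart_i: "cont_semimartingale_on M F t T Si" and smart_j: "cont_semimartingale_on M F t T Sj"
    and pos: "AE \<omega> in M. \<forall>u\<in>{t..T}. 0 < Si u \<omega> \<and> 0 < Sj u \<omega>"
    and QC: "is_qcov_integral M t T (\<lambda>u \<omega>. 1) (\<lambda>u \<omega>. ln (Si u \<omega>)) (\<lambda>u \<omega>. ln (Sj u \<omega>)) QC"
    and I1: "is_stoch_integral M t T (\<lambda>u \<omega>. ln (Si u \<omega>) / Sj u \<omega>) Sj I1"
    and I2: "is_stoch_integral M t T (\<lambda>u \<omega>. ln (Sj u \<omega>) / Si u \<omega>) Si I2"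
    and I3: "is_qcov_integral M t T (\<lambda>u \<omega>. ln (Si u \<omega>) / (Sj u \<omega>)^2) Sj Sj I3"
    and I4: "is_qcov_integral M t T (\<lambda>u \<omega>. ln (Sj u \<omega>) / (Si u \<omega>)^2) Si Si I4"
  shows "AE \<omega> in M. QC \<omega> = ln (Si T \<omega>) * ln (Sj T \<omega>) - ln (Si t \<omega>) * ln (Sj t \<omega>)
      - I1 \<omega> - I2 \<omega> + 1/2 * I3 \<omega> + 1/2 * I4 \<omega>"
proof -
  \<comment> \<open>Clamping at T keeps every index inside [t, T], so that all sampled values are measurable.\<close>
  define p where "p n k = min T (t + real k * (T - t) / real (Suc n))" for n k
  have P: "partition_seq t T p Suc"
    unfolding p_def by (rule partition_seq_uniform_min[OF \<open>t < T\<close>])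
  have p_in: "p n k \<in> {t..T}" for n k
    unfolding p_def using \<open>t < T\<close> by auto
  have p_ends: "p n 0 = t" "p n (Suc n) = T" for n
    using P unfolding partition_seq_def by auto
  have [measurable]: "Si (p n k) \<in> borel_measurable M" "Sj (p n k) \<in> borel_measurable M"
    "Si t \<in> borel_measurable M" "Sj t \<in> borel_measurable M"
    "Si T \<in> borel_measurable M" "Sj T \<in> borel_measurable M" for n k
    using adapted_on_measurable[OF filt cont_semimartingale_onD(1)[OF smart_i]]
      adapted_on_measurable[OF filt cont_semimartingale_onD(1)[OF smart_j]] p_in \<open>t < T\<close> by auto
  from pos have "AE \<omega> in M. \<forall>u\<in>{t..T}. 0 < Sj u \<omega> \<and> 0 < Si u \<omega>"
    by eventually_elim blast
  note remainders_vanish = ln_remainder_sum_conv_in_prob_0[OF filt P \<open>t < T\<close> smart_i smart_j pos]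
    ln_remainder_sum_conv_in_prob_0[OF filt P \<open>t < T\<close> smart_j smart_i this]
  define Z where "Z n \<omega> = ln (Si T \<omega>) * ln (Sj T \<omega>) - ln (Si t \<omega>) * ln (Sj t \<omega>)
      - riemann_sum (\<lambda>u \<omega>. ln (Si u \<omega>) / Sj u \<omega>) Sj p Suc n \<omega>
      - riemann_sum (\<lambda>u \<omega>. ln (Sj u \<omega>) / Si u \<omega>) Si p Suc n \<omega>
      + 1/2 * covariation_sum (\<lambda>u \<omega>. ln (Si u \<omega>) / (Sj u \<omega>)^2) Sj Sj p Suc n \<omega>
      + 1/2 * covariation_sum (\<lambda>u \<omega>. ln (Sj u \<omega>) / (Si u \<omega>)^2) Si Si p Suc n \<omega>
      - ln_remainder_sum (\<lambda>u \<omega>. ln (Si u \<omega>)) Sj p Suc n \<omega>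
      - ln_remainder_sum (\<lambda>u \<omega>. ln (Sj u \<omega>)) Si p Suc n \<omega>" for n \<omega>
  have [measurable]: "I1 \<in> borel_measurable M" "I2 \<in> borel_measurable M" "I3 \<in> borel_measurable M"
    "I4 \<in> borel_measurable M" "QC \<in> borel_measurable M"
    using I1 I2 I3 I4 QC by (auto dest: is_stoch_integralD(1) is_qcov_integralD(1))
  have [measurable]:
    "riemann_sum (\<lambda>u \<omega>. ln (Si u \<omega>) / Sj u \<omega>) Sj p Suc n \<in> borel_measurable M"
    "riemann_sum (\<lambda>u \<omega>. ln (Sj u \<omega>) / Si u \<omega>) Si p Suc n \<in> borel_measurable M"
    "covariation_sum (\<lambda>u \<omega>. ln (Si u \<omega>) / (Sj u \<omega>)^2) Sj Sj p Suc n \<in> borel_measurable M"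
    "covariation_sum (\<lambda>u \<omega>. ln (Sj u \<omega>) / (Si u \<omega>)^2) Si Si p Suc n \<in> borel_measurable M"
    "covariation_sum (\<lambda>u \<omega>. 1) (\<lambda>u \<omega>. ln (Si u \<omega>)) (\<lambda>u \<omega>. ln (Sj u \<omega>)) p Suc n \<in> borel_measurable M"
    "ln_remainder_sum (\<lambda>u \<omega>. ln (Si u \<omega>)) Sj p Suc n \<in> borel_measurable M"
    "ln_remainder_sum (\<lambda>u \<omega>. ln (Sj u \<omega>)) Si p Suc n \<in> borel_measurable M"
    "Z n \<in> borel_measurable M" for n
    unfolding Z_def riemann_sum_def[abs_def] covariation_sum_def[abs_def] ln_remainder_sum_def[abs_def]
    by measurable
  have Z_conv: "conv_in_prob M Z (\<lambda>\<omega>. ln (Si T \<omega>) * ln (Sj T \<omega>) - ln (Si t \<omega>) * ln (Sj t \<omega>)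
      - I1 \<omega> - I2 \<omega> + 1/2 * I3 \<omega> + 1/2 * I4 \<omega> - 0 - 0)"
    unfolding Z_def
    by (intro conv_in_prob_diff conv_in_prob_add conv_in_prob_cmult conv_in_prob_const remainders_vanish
        is_stoch_integralD(2)[OF I1 P] is_stoch_integralD(2)[OF I2 P]
        is_qcov_integralD(2)[OF I3 P] is_qcov_integralD(2)[OF I4 P]) measurable
  have Z_eq: "AE \<omega> in M. Z n \<omega> = covariation_sum (\<lambda>u \<omega>. 1) (\<lambda>u \<omega>. ln (Si u \<omega>)) (\<lambda>u \<omega>. ln (Sj u \<omega>)) p Suc n \<omega>"
    for n
    using pos
  proof eventually_elim
    case (elim \<omega>)
    then have "0 < Si (p n k) \<omega> \<and> 0 < Sj (p n k) \<omega>" for k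
      using p_in by blast
    then show ?case
      using covariation_sum_ln_eq[of Suc n Si p \<omega> Sj, unfolded p_ends] by (simp add: Z_def)
  qed
  have "AE \<omega> in M. QC \<omega> = ln (Si T \<omega>) * ln (Sj T \<omega>) - ln (Si t \<omega>) * ln (Sj t \<omega>)
      - I1 \<omega> - I2 \<omega> + 1/2 * I3 \<omega> + 1/2 * I4 \<omega> - 0 - 0"
    by (rule conv_in_prob_unique[OF _ _ _ is_qcov_integralD(2)[OF QC P] conv_in_prob_AE_cong[OF _ _ _ Z_conv Z_eq]])
       measurable
  then show ?thesis by simp
qed

end

section \<open>Static replication of F\<close>

lemma Ffun_eq: "0 < x \<Longrightarrow> 0 < a \<Longrightarrow> Ffun x a = x / a - 1 - ln x + ln a"
  unfolding Ffun_def by (simp add: ln_div diff_divide_distrib)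

lemma integral_Icc_diff_over_square:
  fixes a b c :: real
  assumes "0 < a" "a \<le> b"
  shows "(\<integral>K. indicator {a..b} K * ((K - c) / K^2) \<partial>lborel) = ln b - ln a + c / b - c / a"
proof -
  have "(\<integral>K. indicator {a..b} K *\<^sub>R ((K - c) / K^2) \<partial>lborel) = (ln b + c / b) - (ln a + c / a)"
  proof (rule integral_FTC_atLeastAtMost[OF \<open>a \<le> b\<close>])
    fix K assume "a \<le> K" "K \<le> b"
    then have "0 < K" using assms by simp
    then have "((\<lambda>K. ln K + c / K) has_real_derivative 1 / K - c / K^2) (at K)"
      by (auto intro!: derivative_eq_intros simp: power2_eq_square)
    moreover have "1 / K - c / K^2 = (K - c) / K^2"
      using \<open>0 < K\<close> by (simp add: field_simps power2_eq_square)
    ultimately have "((\<lambda>K. ln K + c / K) has_real_derivative (K - c) / K^2) (at K)"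
      by (simp only:)
    then show "((\<lambda>K. ln K + c / K) has_vector_derivative (K - c) / K^2) (at K within {a..b})"
      by (simp only: has_real_derivative_iff_has_vector_derivative[symmetric] has_field_derivative_at_within)
  next
    show "continuous_on {a..b} (\<lambda>K. (K - c) / K^2)" using assms by (intro continuous_intros) auto
  qed
  then show ?thesis by simp
qed

lemma Ffun_eq_integral_put:
  assumes "0 < x" "x \<le> a"
  shows "Ffun x a = (\<integral>K. indicator {x..a} K * ((K - x) / K^2) \<partial>lborel)"
proof -
  have "Ffun x a = x / a - 1 - ln x + ln a" "x / x = 1" using assms by (simp_all add: Ffun_eq)
  then show ?thesis unfolding integral_Icc_diff_over_square[OF assms] by linarith
qed

lemma Ffun_eq_integral_call:
  assumes "0 < a" "a \<le> x"
  shows "Ffun x a = (\<integral>K. indicator {a..x} K * ((x - K) / K^2) \<partial>lborel)"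
proof -
  have "indicator {a..x} K * ((x - K) / K^2) = - (indicator {a..x} K * ((K - x) / K^2))" for K :: real
    by (metis minus_diff_eq divide_minus_left mult_minus_right)
  then have "(\<integral>K. indicator {a..x} K * ((x - K) / K^2) \<partial>lborel)
      = - (\<integral>K. indicator {a..x} K * ((K - x) / K^2) \<partial>lborel)"
    by (simp only: Bochner_Integration.integral_minus)
  moreover have "Ffun x a = x / a - 1 - ln x + ln a" "x / x = 1" using assms by (simp_all add: Ffun_eq)
  ultimately show ?thesis unfolding integral_Icc_diff_over_square[OF assms] by linarith
qed

definition option_payoff :: "real \<Rightarrow> real \<Rightarrow> real \<Rightarrow> real" where
  "option_payoff a z K = max (K - z) 0 * (if K \<le> a then 1 else 0) + max (z - K) 0 * (if K > a then 1 else 0)"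

lemma option_payoff_nonneg: "0 \<le> option_payoff a z K"
  unfolding option_payoff_def by auto

lemma option_payoff_measurable [measurable]: "option_payoff a z \<in> borel_measurable borel"
  unfolding option_payoff_def by measurable

lemma Pi_ij_eq_option_payoff: "Pi_ij \<alpha> \<beta> x y K1 K2 = option_payoff \<alpha> x K1 * option_payoff \<beta> y K2"
  unfolding Pi_ij_def option_payoff_def ..

lemma Ffun_eq_put_call_integrals:
  assumes "0 < z" "0 < z0"
  shows "Ffun z z0 = (LINT K:{0<..z0}|lborel. max (K - z) 0 / K^2) + (LINT K:{z0..}|lborel. max (z - K) 0 / K^2)"
proof (cases "z < z0")
  case True
  have "(LINT K:{0<..z0}|lborel. max (K - z) 0 / K^2) = (\<integral>K. indicator {z..z0} K * ((K - z) / K^2) \<partial>lborel)"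
    unfolding set_lebesgue_integral_def
    by (rule Bochner_Integration.integral_cong[OF refl]) (use True \<open>0 < z\<close> in \<open>auto simp: indicator_def\<close>)
  moreover have "(LINT K:{z0..}|lborel. max (z - K) 0 / K^2) = 0"
  proof -
    have "(\<lambda>K. indicator {z0..} K *\<^sub>R (max (z - K) 0 / K^2)) = (\<lambda>K. 0 :: real)"
      using True by (auto simp: indicator_def)
    then show ?thesis unfolding set_lebesgue_integral_def by simp
  qed
  ultimately show ?thesis using True assms by (simp add: Ffun_eq_integral_put)
next
  case False
  have "(LINT K:{z0..}|lborel. max (z - K) 0 / K^2) = (\<integral>K. indicator {z0..z} K * ((z - K) / K^2) \<partial>lborel)"
    unfolding set_lebesgue_integral_def
    by (rule Bochner_Integration.integral_cong[OF refl]) (use False in \<open>auto simp: indicator_def\<close>)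
  moreover have "(LINT K:{0<..z0}|lborel. max (K - z) 0 / K^2) = 0"
  proof -
    have "(\<lambda>K. indicator {0<..z0} K *\<^sub>R (max (K - z) 0 / K^2)) = (\<lambda>K. 0 :: real)"
      using False by (auto simp: indicator_def)
    then show ?thesis unfolding set_lebesgue_integral_def by simp
  qed
  ultimately show ?thesis using False assms by (simp add: Ffun_eq_integral_call)
qed

lemma Ffun_eq_integral_option_payoff:
  assumes "0 < x" "0 < \<alpha>"
  shows "(\<integral>K. indicator {0<..} K * (option_payoff \<alpha> x K / K^2) \<partial>lborel) = Ffun x \<alpha>"
proof (cases "x < \<alpha>")
  case True
  have "(\<integral>K. indicator {0<..} K * (option_payoff \<alpha> x K / K^2) \<partial>lborel)
      = (\<integral>K. indicator {x..\<alpha>} K * ((K - x) / K^2) \<partial>lborel)"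
    by (rule Bochner_Integration.integral_cong[OF refl])
       (use True assms in \<open>auto simp: indicator_def option_payoff_def\<close>)
  then show ?thesis using True assms by (simp add: Ffun_eq_integral_put)
next
  case False
  \<comment> \<open>The two integrands differ only at K = \<alpha>, where the payoff switches from put to call.\<close>
  have "(\<integral>K. indicator {0<..} K * (option_payoff \<alpha> x K / K^2) \<partial>lborel)
      = (\<integral>K. indicator {\<alpha>..x} K * ((x - K) / K^2) \<partial>lborel)"
  proof (rule integral_cong_AE)
    show "AE K in lborel. indicator {0<..} K * (option_payoff \<alpha> x K / K^2) = indicator {\<alpha>..x} K * ((x - K) / K^2)"
      using AE_lborel_singleton[of \<alpha>]
      by eventually_elim (use False assms in \<open>auto simp: indicator_def option_payoff_def\<close>)
  qed measurable
  then show ?thesis using False assms by (simp add: Ffun_eq_integral_call)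
qed

lemma Ffun_mult_eq_integral_Pi_ij:
  assumes "0 < x" "0 < y" "0 < \<alpha>" "0 < \<beta>"
  shows "Ffun x \<alpha> * Ffun y \<beta> =
    (LINT K:({0<..} \<times> {0<..})|lborel. Pi_ij \<alpha> \<beta> x y (fst K) (snd K) / ((fst K)^2 * (snd K)^2))"
proof -
  define f where "f a z K = indicator {0<..} K * (option_payoff a z K / K^2)" for a z K :: real
  have [measurable]: "f a z \<in> borel_measurable borel" for a z
    unfolding f_def[abs_def] by measurable
  have f_nonneg: "0 \<le> f a z K" for a z K
    unfolding f_def by (intro mult_nonneg_nonneg divide_nonneg_nonneg option_payoff_nonneg) auto
  have "(LINT K:({0<..} \<times> {0<..})|lborel. Pi_ij \<alpha> \<beta> x y (fst K) (snd K) / ((fst K)^2 * (snd K)^2))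
      = (\<integral>K. f \<alpha> x (fst K) * f \<beta> y (snd K) \<partial>(lborel \<Otimes>\<^sub>M lborel))"
    unfolding set_lebesgue_integral_def lborel_prod[symmetric]
    by (rule Bochner_Integration.integral_cong[OF refl])
       (auto simp: f_def Pi_ij_eq_option_payoff indicator_times)
  also have "\<dots> = (\<integral>u. f \<alpha> x u \<partial>lborel) * (\<integral>v. f \<beta> y v \<partial>lborel)"
  proof -
    have "(\<integral>\<^sup>+K. ennreal (f \<alpha> x (fst K) * f \<beta> y (snd K)) \<partial>(lborel \<Otimes>\<^sub>M lborel))
        = (\<integral>\<^sup>+u. \<integral>\<^sup>+v. ennreal (f \<alpha> x u) * ennreal (f \<beta> y v) \<partial>lborel \<partial>lborel)"
      using lborel.nn_integral_fst[of "\<lambda>K. ennreal (f \<alpha> x (fst K) * f \<beta> y (snd K))" lborel]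
      by (simp add: ennreal_mult f_nonneg)
    also have "\<dots> = (\<integral>\<^sup>+u. ennreal (f \<alpha> x u) \<partial>lborel) * (\<integral>\<^sup>+v. ennreal (f \<beta> y v) \<partial>lborel)"
      by (simp add: nn_integral_cmult nn_integral_multc)
    finally show ?thesis
      by (simp add: integral_eq_nn_integral f_nonneg enn2real_mult)
  qed
  finally show ?thesis
    using assms Ffun_eq_integral_option_payoff unfolding f_def by simp
qed

lemma ln_mult_ln_diff_eq_Ffun:
  fixes x y \<alpha> \<beta> :: real
  assumes "0 < x" "0 < y" "0 < \<alpha>" "0 < \<beta>"
  shows "ln x * ln y - ln \<alpha> * ln \<beta> = ln \<alpha> / \<beta> * (y - \<beta>) + ln \<beta> / \<alpha> * (x - \<alpha>)
    - ln \<alpha> * Ffun y \<beta> - ln \<beta> * Ffun x \<alpha> + (x - \<alpha>) * (y - \<beta>) / (\<alpha> * \<beta>)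
    - (x - \<alpha>) / \<alpha> * Ffun y \<beta> - (y - \<beta>) / \<beta> * Ffun x \<alpha> + Ffun x \<alpha> * Ffun y \<beta>"
proof -
  define u v where "u = (x - \<alpha>) / \<alpha>" and "v = (y - \<beta>) / \<beta>"
  have "Ffun x \<alpha> = u - ln x + ln \<alpha>" "Ffun y \<beta> = v - ln y + ln \<beta>"
    unfolding Ffun_def u_def v_def using assms by (simp_all add: ln_div)
  moreover have "ln \<alpha> / \<beta> * (y - \<beta>) = ln \<alpha> * v" "ln \<beta> / \<alpha> * (x - \<alpha>) = ln \<beta> * u"
    "(x - \<alpha>) * (y - \<beta>) / (\<alpha> * \<beta>) = u * v"
    unfolding u_def v_def by simp_all
  ultimately show ?thesis
    unfolding u_def[symmetric] v_def[symmetric] by algebra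
qed

lemma mult_diff_eq_Call_Put:
  "(x - a) * (y - b) = Call a x * Call b y - Call a x * Put b y - Put a x * Call b y + Put a x * Put b y"
proof -
  have "Call c z - Put c z = z - c" for c z :: real unfolding Call_def Put_def by (simp add: max_def)
  then have "(x - a) * (y - b) = (Call a x - Put a x) * (Call b y - Put b y)" by simp
  then show ?thesis by (simp add: algebra_simps)
qed

theorem mainTheorem6:
  fixes M :: "'a measure" and F :: "real \<Rightarrow> 'a measure"
    and Si Sj :: "real \<Rightarrow> 'a \<Rightarrow> real" and t T :: real
    and QC I1 I2 I3 I4 :: "'a \<Rightarrow> real"
  assumes "prob_space M" and "is_filtration M F"
    and "0 \<le> t" and "t < T"
    and "cont_semimartingale_on M F t T Si" and "cont_semimartingale_on M F t T Sj"
    and "AE \<omega> in M. \<forall>u\<in>{t..T}. 0 < Si u \<omega> \<and> 0 < Sj u \<omega>"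
  defines "Yi \<equiv> \<lambda>u \<omega>. ln (Si u \<omega>)" and "Yj \<equiv> \<lambda>u \<omega>. ln (Sj u \<omega>)"
  assumes "is_qcov_integral M t T (\<lambda>u \<omega>. 1) Yi Yj QC"
    and "is_stoch_integral M t T (\<lambda>u \<omega>. Yi u \<omega> / Sj u \<omega>) Sj I1"
    and "is_stoch_integral M t T (\<lambda>u \<omega>. Yj u \<omega> / Si u \<omega>) Si I2"
    and "is_qcov_integral M t T (\<lambda>u \<omega>. Yi u \<omega> / (Sj u \<omega>)^2) Sj Sj I3"
    and "is_qcov_integral M t T (\<lambda>u \<omega>. Yj u \<omega> / (Si u \<omega>)^2) Si Si I4"
  shows
    "(\<forall>z z0. 0 < z \<longrightarrow> 0 < z0 \<longrightarrow>
        Ffun z z0 = (LINT K:{0<..z0}|lborel. max (K - z) 0 / K^2)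
                  + (LINT K:{z0..}|lborel. max (z - K) 0 / K^2))
   \<and> (\<forall>x y \<alpha> \<beta>. 0 < x \<longrightarrow> 0 < y \<longrightarrow> 0 < \<alpha> \<longrightarrow> 0 < \<beta> \<longrightarrow>
        Ffun x \<alpha> * Ffun y \<beta> =
          (LINT K:({0<..} \<times> {0<..})|lborel.
              Pi_ij \<alpha> \<beta> x y (fst K) (snd K) / ((fst K)^2 * (snd K)^2)))
   \<and> (AE \<omega> in M.
        (let x = Si T \<omega>; y = Sj T \<omega>; \<alpha> = Si t \<omega>; \<beta> = Sj t \<omega>; yi = Yi t \<omega>; yj = Yj t \<omega> in
         QC \<omega> = yi / \<beta> * (y - \<beta>) + yj / \<alpha> * (x - \<alpha>) - yi * Ffun y \<beta> - yj * Ffun x \<alpha>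
                + (x - \<alpha>) * (y - \<beta>) / (\<alpha> * \<beta>) - (x - \<alpha>) / \<alpha> * Ffun y \<beta>
                - (y - \<beta>) / \<beta> * Ffun x \<alpha> + Ffun x \<alpha> * Ffun y \<beta>
                - I1 \<omega> - I2 \<omega> + 1/2 * I3 \<omega> + 1/2 * I4 \<omega>))
   \<and> (\<forall>x y a b :: real. (x - a) * (y - b) =
        Call a x * Call b y - Call a x * Put b y - Put a x * Call b y + Put a x * Put b y)"
proof -
  interpret prob_space M by fact
  have "AE \<omega> in M. QC \<omega> = ln (Si T \<omega>) * ln (Sj T \<omega>) - ln (Si t \<omega>) * ln (Sj t \<omega>)
      - I1 \<omega> - I2 \<omega> + 1/2 * I3 \<omega> + 1/2 * I4 \<omega>"
    using assms(2,4-7) assms(10-14)[unfolded Yi_def Yj_def] by (rule quadratic_covariation_ln_eq)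
  then have "AE \<omega> in M.
        (let x = Si T \<omega>; y = Sj T \<omega>; \<alpha> = Si t \<omega>; \<beta> = Sj t \<omega>; yi = Yi t \<omega>; yj = Yj t \<omega> in
         QC \<omega> = yi / \<beta> * (y - \<beta>) + yj / \<alpha> * (x - \<alpha>) - yi * Ffun y \<beta> - yj * Ffun x \<alpha>
                + (x - \<alpha>) * (y - \<beta>) / (\<alpha> * \<beta>) - (x - \<alpha>) / \<alpha> * Ffun y \<beta>
                - (y - \<beta>) / \<beta> * Ffun x \<alpha> + Ffun x \<alpha> * Ffun y \<beta>
                - I1 \<omega> - I2 \<omega> + 1/2 * I3 \<omega> + 1/2 * I4 \<omega>)"
    using assms(7)
  proof eventually_elim
    case (elim \<omega>)
    then have "0 < Si T \<omega>" "0 < Sj T \<omega>" "0 < Si t \<omega>" "0 < Sj t \<omega>"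
      using \<open>t < T\<close> by auto
    then show ?case
      using elim(1) ln_mult_ln_diff_eq_Ffun unfolding Let_def Yi_def Yj_def by simp
  qed
  then show ?thesis
    using Ffun_eq_put_call_integrals Ffun_mult_eq_integral_Pi_ij mult_diff_eq_Call_Put by blast
qed

end
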